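(* Let $\boldsymbol\alpha=\rho_{(n,m)}(\mathbf z)$ with $\mathbf z\in\mathbb C^m$. For each $k=1,\dots,n+1$, the coherent state $\Phi^{(\hbar)}_{\boldsymbol\alpha}$ is an eigenfunction of the operator $\mathbf A_k=\mathbf M\mathbf E_k\mathbf M^{-1}$ with eigenvalue $\overline{\alpha_k}$: $\mathbf A_k\Phi^{(\hbar)}_{\boldsymbol\alpha}=\overline{\alpha_k}\,\Phi^{(\hbar)}_{\boldsymbol\alpha}$. Moreover $\Phi^{(\hbar)}_{\boldsymbol\alpha}=\mathbf M\, e^{\mathbf x\cdot\boldsymbol\alpha/\hbar}$ and $\mathbf E_k e^{\mathbf x\cdot\boldsymbol\alpha/\hbar}=\overline{\alpha_k}\,e^{\mathbf x\cdot\boldsymbol\alpha/\hbar}$ (functions of $\mathbf x\in S^n$).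
   Context: $(n,m)$ is one of $(2,2),(3,4),(5,8)$, $\hbar>0$. For $\mathbf x\in\mathbb R^{n+1}$, $\boldsymbol\alpha\in\mathbb C^{n+1}$, $\mathbf x\cdot\boldsymbol\alpha=\sum_j x_j\overline{\alpha_j}$. The map $\rho_{(n,m)}=(\rho_1,\dots,\rho_{n+1}):\mathbb C^m\to\mathbb C^{n+1}$ is defined by: for $(2,2)$: $\rho_1=\tfrac12(z_2^2-z_1^2)$, $\rho_2=\tfrac{i}{2}(z_1^2+z_2^2)$, $\rho_3=z_1z_2$; for $(3,4)$: $\rho_1=z_1z_3+z_2z_4$, $\rho_2=i(z_1z_3-z_2z_4)$, $\rho_3=i(z_1z_4+z_2z_3)$, $\rho_4=z_1z_4-z_2z_3$; for $(5,8)$: $\rho_1=i(-z_1z_6+z_3z_8+z_2z_5-z_4z_7)$, $\rho_2=z_1z_6+z_3z_8+z_2z_5+z_4z_7$, $\rho_3=z_2z_6+z_3z_7-z_1z_5-z_4z_8$, $\rho_4=i(-z_1z_5+z_4z_8-z_2z_6+z_3z_7)$, $\rho_5=i(-z_1z_8-z_2z_7-z_3z_6-z_4z_5)$, $\rho_6=z_1z_8+z_2z_7-z_3z_6-z_4z_5$; its image lies in $\{\boldsymbol\alpha:\sum_j\alpha_j^2=0\}$. The coherent state is $\Phi^{(\hbar)}_{\boldsymbol\alpha}(\mathbf x)=\sum_{\ell\ge0}\frac{\sqrt{2\ell+n-1}}{\ell!\sqrt{n-1}}\big(\frac{\mathbf x\cdot\boldsymbol\alpha}{\hbar}\big)^\ell$,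 $\mathbf x\in S^n$. $\Delta_{S^n}$ is the normalized spherical Laplacian on $L^2(S^n)$, the self-adjoint operator acting on spherical harmonics of degree $k$ by the scalar $(k+\frac{n-1}{2})^2$. Define by functional calculus $\mathbf M=\sqrt{\tfrac{2}{n-1}}\,\Delta_{S^n}^{1/4}$ and $\mathbf N=\hbar(\sqrt{\Delta_{S^n}}-\tfrac{n-1}{2})$. Let $\tilde{\mathbf L}_{kj}$ be the restriction to $S^n$ of the angular momentum vector field $y_k\partial_{y_j}-y_j\partial_{y_k}$ on $\mathbb R^{n+1}$ (tangent to $S^n$), and let $\mathbf E_k=\sum_{j=1}^{n+1}(-i x_j)(-i\hbar\tilde{\mathbf L}_{kj})+x_k\mathbf N$, where $x_j$ denotes multiplication by the $j$-th coordinate on $S^n$. Set $\mathbf A_k=\mathbf M\mathbf E_k\mathbf M^{-1}$. *)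

theory Defs
  imports "HOL-Analysis.Analysis"
begin

text \<open>Points of R^(n+1) are functions nat => real, coordinates indexed by {1..n+1},
  extensional (value undefined outside the index set), as in the product measure PiM.\<close>

definition Rn :: "nat \<Rightarrow> (nat \<Rightarrow> real) measure" where
  "Rn n = PiM {1..n+1} (\<lambda>_. lborel)"

definition sqnorm :: "nat \<Rightarrow> (nat \<Rightarrow> real) \<Rightarrow> real" where
  "sqnorm n x = (\<Sum>j=1..n+1. (x j)\<^sup>2)"

definition Sph :: "nat \<Rightarrow> (nat \<Rightarrow> real) set" where
  "Sph n = {x \<in> PiE {1..n+1} (\<lambda>_. UNIV). sqnorm n x = 1}"

definition unit_ball_n :: "nat \<Rightarrow> (nat \<Rightarrow> real) set" where
  "unit_ball_n n = {x \<in> space (Rn n). sqnorm n x \<le> 1}"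

definition nrm :: "nat \<Rightarrow> (nat \<Rightarrow> real) \<Rightarrow> (nat \<Rightarrow> real)" where
  "nrm n x = restrict (\<lambda>i. x i / sqrt (sqnorm n x)) {1..n+1}"

text \<open>Surface integral over S^n via the cone formula
  int_{S^n} h d sigma = (n+1) * int_{|x| <= 1} h(x/|x|) dx.\<close>
definition sph_int :: "nat \<Rightarrow> ((nat \<Rightarrow> real) \<Rightarrow> complex) \<Rightarrow> complex" where
  "sph_int n h = of_nat (n+1) *
     integral\<^sup>L (Rn n) (\<lambda>x. indicator (unit_ball_n n) x *\<^sub>R h (nrm n x))"

definition sph_L2 :: "nat \<Rightarrow> ((nat \<Rightarrow> real) \<Rightarrow> complex) \<Rightarrow> bool" where
  "sph_L2 n f \<longleftrightarrow>
     (\<lambda>x. indicator (unit_ball_n n) x *\<^sub>R f (nrm n x)) \<in> borel_measurable (Rn n) \<and>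
     integrable (Rn n) (\<lambda>x. indicator (unit_ball_n n) x * (cmod (f (nrm n x)))\<^sup>2)"

definition sph_inner :: "nat \<Rightarrow> ((nat \<Rightarrow> real) \<Rightarrow> complex) \<Rightarrow> ((nat \<Rightarrow> real) \<Rightarrow> complex) \<Rightarrow> complex" where
  "sph_inner n f g = sph_int n (\<lambda>x. f x * cnj (g x))"

definition sec_partial :: "((nat \<Rightarrow> real) \<Rightarrow> complex) \<Rightarrow> nat \<Rightarrow> (nat \<Rightarrow> real) \<Rightarrow> complex" where
  "sec_partial P j x =
     vector_derivative (\<lambda>s. vector_derivative (\<lambda>t. P (x(j := x j + t))) (at s)) (at 0)"

definition hom_harm_poly :: "nat \<Rightarrow> nat \<Rightarrow> ((nat \<Rightarrow> real) \<Rightarrow> complex) \<Rightarrow> bool" where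
  "hom_harm_poly n k P \<longleftrightarrow>
     (\<exists>(c :: (nat \<Rightarrow> nat) \<Rightarrow> complex) Bs. finite Bs \<and>
        (\<forall>\<beta>\<in>Bs. (\<Sum>j=1..n+1. \<beta> j) = k) \<and>
        (\<forall>x. P x = (\<Sum>\<beta>\<in>Bs. c \<beta> * (\<Prod>j=1..n+1. (complex_of_real (x j)) ^ (\<beta> j))))) \<and>
     (\<forall>x. (\<Sum>j=1..n+1. sec_partial P j x) = 0)"

definition sph_harm :: "nat \<Rightarrow> nat \<Rightarrow> ((nat \<Rightarrow> real) \<Rightarrow> complex) \<Rightarrow> bool" where
  "sph_harm n k Y \<longleftrightarrow> (\<exists>P. hom_harm_poly n k P \<and> (\<forall>x\<in>Sph n. Y x = P x))"

text \<open>Eigenvalue of the normalized spherical Laplacian on degree-k harmonics.\<close>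
definition lapl_ev :: "nat \<Rightarrow> nat \<Rightarrow> real" where
  "lapl_ev n k = (real k + (real n - 1) / 2)\<^sup>2"

text \<open>Functional calculus: fcalc n F f g means  g = F(Delta_{S^n}) f  in L^2(S^n)
  (f in the domain). Since Delta is diagonal on the complete orthogonal decomposition of
  L^2(S^n) into spherical harmonics, this holds iff f, g are in L^2 and
  <g, Y> = F(lambda_k) <f, Y> for every spherical harmonic Y of degree k.\<close>
definition fcalc :: "nat \<Rightarrow> (real \<Rightarrow> real) \<Rightarrow> ((nat \<Rightarrow> real) \<Rightarrow> complex) \<Rightarrow> ((nat \<Rightarrow> real) \<Rightarrow> complex) \<Rightarrow> bool" where
  "fcalc n F f g \<longleftrightarrow> sph_L2 n f \<and> sph_L2 n g \<and>
     (\<forall>k Y. sph_harm n k Y \<longrightarrow>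
        sph_inner n g Y = complex_of_real (F (lapl_ev n k)) * sph_inner n f Y)"

definition M_op :: "nat \<Rightarrow> ((nat \<Rightarrow> real) \<Rightarrow> complex) \<Rightarrow> ((nat \<Rightarrow> real) \<Rightarrow> complex) \<Rightarrow> bool" where
  "M_op n = fcalc n (\<lambda>l. sqrt (2 / (real n - 1)) * l powr (1/4))"

definition N_op :: "nat \<Rightarrow> real \<Rightarrow> ((nat \<Rightarrow> real) \<Rightarrow> complex) \<Rightarrow> ((nat \<Rightarrow> real) \<Rightarrow> complex) \<Rightarrow> bool" where
  "N_op n hbar = fcalc n (\<lambda>l. hbar * (sqrt l - (real n - 1) / 2))"

text \<open>Flow of the vector field y_k d/dy_j - y_j d/dy_k (rotation in the (j,k)-plane).\<close>
definition rot :: "nat \<Rightarrow> nat \<Rightarrow> real \<Rightarrow> (nat \<Rightarrow> real) \<Rightarrow> (nat \<Rightarrow> real)" where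
  "rot k j t x = (if k = j then x else
     x(j := x j * cos t + x k * sin t, k := x k * cos t - x j * sin t))"

definition Lt :: "nat \<Rightarrow> nat \<Rightarrow> ((nat \<Rightarrow> real) \<Rightarrow> complex) \<Rightarrow> (nat \<Rightarrow> real) \<Rightarrow> complex" where
  "Lt k j f x = vector_derivative (\<lambda>t. f (rot k j t x)) (at 0)"

definition E_op :: "nat \<Rightarrow> real \<Rightarrow> nat \<Rightarrow> ((nat \<Rightarrow> real) \<Rightarrow> complex) \<Rightarrow> ((nat \<Rightarrow> real) \<Rightarrow> complex) \<Rightarrow> bool" where
  "E_op n hbar k f g \<longleftrightarrow> (\<exists>Nf. N_op n hbar f Nf \<and>
     (\<forall>x\<in>Sph n. (\<forall>j\<in>{1..n+1}. (\<lambda>t. f (rot k j t x)) differentiable (at 0)) \<and>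
        g x = (\<Sum>j=1..n+1. (- \<i> * complex_of_real (x j)) * (- \<i> * complex_of_real hbar * Lt k j f x))
              + complex_of_real (x k) * Nf x))"

text \<open>A_k = M E_k M^(-1):  A_k f = g  iff  M h = f, E_k h = u, M u = g for some h, u.\<close>
definition A_op :: "nat \<Rightarrow> real \<Rightarrow> nat \<Rightarrow> ((nat \<Rightarrow> real) \<Rightarrow> complex) \<Rightarrow> ((nat \<Rightarrow> real) \<Rightarrow> complex) \<Rightarrow> bool" where
  "A_op n hbar k f g \<longleftrightarrow> (\<exists>h u. M_op n h f \<and> E_op n hbar k h u \<and> M_op n u g)"

definition dotc :: "nat \<Rightarrow> (nat \<Rightarrow> real) \<Rightarrow> (nat \<Rightarrow> complex) \<Rightarrow> complex" where
  "dotc n x \<alpha> = (\<Sum>j=1..n+1. complex_of_real (x j) * cnj (\<alpha> j))"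

definition coh :: "nat \<Rightarrow> real \<Rightarrow> (nat \<Rightarrow> complex) \<Rightarrow> (nat \<Rightarrow> real) \<Rightarrow> complex" where
  "coh n hbar \<alpha> x = (\<Sum>l. complex_of_real (sqrt (2 * real l + real n - 1) / (fact l * sqrt (real n - 1)))
                         * (dotc n x \<alpha> / complex_of_real hbar) ^ l)"

definition rho22 :: "(nat \<Rightarrow> complex) \<Rightarrow> nat \<Rightarrow> complex" where
  "rho22 z j = (if j = 1 then ((z 2)\<^sup>2 - (z 1)\<^sup>2) / 2
     else if j = 2 then \<i> / 2 * ((z 1)\<^sup>2 + (z 2)\<^sup>2)
     else if j = 3 then z 1 * z 2 else 0)"

definition rho34 :: "(nat \<Rightarrow> complex) \<Rightarrow> nat \<Rightarrow> complex" where
  "rho34 z j = (if j = 1 then z 1 * z 3 + z 2 * z 4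
     else if j = 2 then \<i> * (z 1 * z 3 - z 2 * z 4)
     else if j = 3 then \<i> * (z 1 * z 4 + z 2 * z 3)
     else if j = 4 then z 1 * z 4 - z 2 * z 3 else 0)"

definition rho58 :: "(nat \<Rightarrow> complex) \<Rightarrow> nat \<Rightarrow> complex" where
  "rho58 z j = (if j = 1 then \<i> * (- z 1 * z 6 + z 3 * z 8 + z 2 * z 5 - z 4 * z 7)
     else if j = 2 then z 1 * z 6 + z 3 * z 8 + z 2 * z 5 + z 4 * z 7
     else if j = 3 then z 2 * z 6 + z 3 * z 7 - z 1 * z 5 - z 4 * z 8
     else if j = 4 then \<i> * (- z 1 * z 5 + z 4 * z 8 - z 2 * z 6 + z 3 * z 7)
     else if j = 5 then \<i> * (- z 1 * z 8 - z 2 * z 7 - z 3 * z 6 - z 4 * z 5)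
     else if j = 6 then z 1 * z 8 + z 2 * z 7 - z 3 * z 6 - z 4 * z 5 else 0)"

definition rho :: "nat \<Rightarrow> nat \<Rightarrow> (nat \<Rightarrow> complex) \<Rightarrow> nat \<Rightarrow> complex" where
  "rho n m = (if (n, m) = (2, 2) then rho22 else if (n, m) = (3, 4) then rho34
              else if (n, m) = (5, 8) then rho58 else (\<lambda>_ _. 0))"

end

theory Submission
  imports Defs
begin

text \<open>Put \<open>b = conj \<alpha> / \<hbar>\<close>, so that \<open>x \<cdot> \<alpha> / \<hbar> = \<Sum>\<^sub>j x\<^sub>j b\<^sub>j\<close>. Since \<open>\<alpha> = \<rho>(z)\<close> is
  isotropic, \<open>\<Sum>\<^sub>j \<alpha>\<^sub>j\<^sup>2 = 0\<close>, so is \<open>b\<close>, and every power \<open>(x \<cdot> b)\<^sup>l\<close> is a harmonic polynomial,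
  homogeneous of degree \<open>l\<close>; on \<open>S\<^sup>n\<close> it is therefore orthogonal to the spherical harmonics of every
  degree \<open>k \<noteq> l\<close>. Hence the Taylor series \<open>e\<^sup>x\<^sup>\<cdot>\<^sup>b = \<Sum>\<^sub>l (x \<cdot> b)\<^sup>l / l!\<close> is the decomposition of the
  exponential into spherical harmonics, and a function \<open>F(\<Delta>)\<close> of the Laplacian acts on it by
  multiplying the \<open>l\<close>-th term by \<open>F((l + (n-1)/2)\<^sup>2)\<close>. For \<open>M\<close> this yields the coherent state,
  for \<open>N\<close> it yields \<open>\<hbar> (x \<cdot> b) e\<^sup>x\<^sup>\<cdot>\<^sup>b\<close>. The eigenvalue equation for \<open>E\<^sub>k\<close> is then a direct
  computation of the rotation derivatives on the sphere, and the one for \<open>A\<^sub>k\<close> follows because \<open>M\<close>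
  commutes with scalars.\<close>

section \<open>Dilations of the product Lebesgue measure\<close>

interpretation lborel_prod: product_sigma_finite "\<lambda>_::nat. lborel :: real measure"
  by standard

lemma measurable_PiM_lborel_component [measurable]:
  "(\<lambda>x. x i) \<in> borel_measurable (PiM I (\<lambda>_::nat. lborel :: real measure))"
proof (cases "i \<in> I")
  case True
  then show ?thesis by measurable
next
  case False
  have "(\<lambda>x. undefined) \<in> borel_measurable (PiM I (\<lambda>_::nat. lborel :: real measure))"
    by simp
  then show ?thesis
    by (rule measurable_cong[THEN iffD1, rotated])
      (use False in \<open>auto simp: space_PiM PiE_def extensional_def\<close>)
qed

definition dilate :: "nat set \<Rightarrow> real \<Rightarrow> (nat \<Rightarrow> real) \<Rightarrow> (nat \<Rightarrow> real)" where
  "dilate I c x = restrict (\<lambda>i. c * x i) I"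

lemma measurable_dilate [measurable]:
  "dilate I c \<in> PiM I (\<lambda>_. lborel) \<rightarrow>\<^sub>M PiM I (\<lambda>_::nat. lborel :: real measure)"
  unfolding dilate_def by measurable

lemma emeasure_lborel_vimage_mult:
  assumes "c > 0" "A \<in> sets lborel"
  shows "ennreal c * emeasure lborel ((*) c -` A) = emeasure (lborel :: real measure) A"
proof -
  have "emeasure lborel A = emeasure (density (distr lborel borel ((*) c)) (\<lambda>_. \<bar>c\<bar>)) A"
    using lborel_distr_mult'[of c] assms by simp
  also have "\<dots> = (\<integral>\<^sup>+x. ennreal c * indicator A x \<partial>distr lborel borel ((*) c))"
    using assms by (subst emeasure_density) (auto intro!: nn_integral_cong simp: mult.commute)
  also have "\<dots> = ennreal c * emeasure (distr lborel borel ((*) c)) A"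
    using assms by (subst nn_integral_cmult) auto
  also have "\<dots> = ennreal c * emeasure lborel ((*) c -` A)"
    using assms by (subst emeasure_distr) auto
  finally show ?thesis by simp
qed

lemma PiM_lborel_dilate:
  assumes I: "finite I" and c: "c > 0"
  shows "density (distr (PiM I (\<lambda>_. lborel)) (PiM I (\<lambda>_. lborel)) (dilate I c)) (\<lambda>_. ennreal (c ^ card I))
       = PiM I (\<lambda>_::nat. lborel :: real measure)"
    (is "?D = _")
proof (rule lborel_prod.PiM_eqI[OF I])
  fix A :: "nat \<Rightarrow> real set"
  assume A: "\<And>i. i \<in> I \<Longrightarrow> A i \<in> sets lborel"
  have vimage_sets: "(*) c -` A i \<in> sets borel" if "i \<in> I" for i
    using measurable_sets[of "(*) c" borel borel "A i"] A[OF that] by simp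
  have vimage_dilate: "dilate I c -` Pi\<^sub>E I A \<inter> space (PiM I (\<lambda>_. lborel)) = Pi\<^sub>E I (\<lambda>i. (*) c -` A i)"
    by (auto simp: dilate_def space_PiM PiE_def Pi_def extensional_def)
  have "emeasure ?D (Pi\<^sub>E I A)
      = ennreal (c ^ card I) * emeasure (distr (PiM I (\<lambda>_. lborel)) (PiM I (\<lambda>_. lborel)) (dilate I c)) (Pi\<^sub>E I A)"
    using A I by (subst emeasure_density) (auto intro!: sets_PiM_I_finite simp: nn_integral_cmult_indicator)
  also have "\<dots> = ennreal (c ^ card I) * emeasure (PiM I (\<lambda>_. lborel)) (Pi\<^sub>E I (\<lambda>i. (*) c -` A i))"
    using A I by (subst emeasure_distr) (auto intro!: sets_PiM_I_finite simp: vimage_dilate)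
  also have "\<dots> = ennreal (c ^ card I) * (\<Prod>i\<in>I. emeasure lborel ((*) c -` A i))"
    using vimage_sets I by (subst lborel_prod.emeasure_PiM) auto
  also have "\<dots> = (\<Prod>i\<in>I. ennreal c * emeasure lborel ((*) c -` A i))"
    using c by (simp add: prod.distrib ennreal_power prod_constant)
  also have "\<dots> = (\<Prod>i\<in>I. emeasure lborel (A i))"
    using A c by (intro prod.cong refl emeasure_lborel_vimage_mult) auto
  finally show "emeasure ?D (Pi\<^sub>E I A) = (\<Prod>i\<in>I. emeasure lborel (A i))" .
qed simp

lemma integral_PiM_lborel_dilate:
  fixes f :: "(nat \<Rightarrow> real) \<Rightarrow> complex"
  assumes I: "finite I" and c: "c > 0"
    and f [measurable]: "f \<in> borel_measurable (PiM I (\<lambda>_. lborel))"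
  shows "integral\<^sup>L (PiM I (\<lambda>_. lborel)) (\<lambda>x. f (dilate I c x))
       = integral\<^sup>L (PiM I (\<lambda>_. lborel)) f / c ^ card I"
proof -
  have "integral\<^sup>L (PiM I (\<lambda>_. lborel)) f
     = integral\<^sup>L (density (distr (PiM I (\<lambda>_. lborel)) (PiM I (\<lambda>_. lborel)) (dilate I c))
         (\<lambda>_. ennreal (c ^ card I))) f"
    by (simp add: PiM_lborel_dilate[OF I c])
  also have "\<dots> = integral\<^sup>L (distr (PiM I (\<lambda>_. lborel)) (PiM I (\<lambda>_. lborel)) (dilate I c))
                    (\<lambda>x. (c ^ card I) *\<^sub>R f x)"
    using c by (subst integral_density) auto
  also have "\<dots> = (c ^ card I) *\<^sub>R integral\<^sup>L (PiM I (\<lambda>_. lborel)) (\<lambda>x. f (dilate I c x))"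
    by (subst integral_distr) auto
  finally show ?thesis
    using c by (simp add: field_simps scaleR_conv_of_real del: of_real_power)
qed

section \<open>Integrals of partial derivatives\<close>

lemma lborel_integral_derivative_eq_0:
  fixes u v :: "real \<Rightarrow> complex"
  assumes R: "R > 0"
    and u [measurable]: "u \<in> borel_measurable lborel"
    and bound: "\<And>t. norm (u t) \<le> B"
    and cont: "continuous_on UNIV v"
    and S: "finite S"
    and deriv: "\<And>t. t \<notin> S \<Longrightarrow> (v has_vector_derivative u t) (at t)"
    and supp: "\<And>t. \<bar>t\<bar> \<ge> R \<Longrightarrow> v t = 0 \<and> u t = 0"
  shows "integral\<^sup>L lborel u = 0"
proof -
  have u_eq: "u = (\<lambda>t. indicator {-R..R} t *\<^sub>R u t)"
    using supp by (auto simp: indicator_def fun_eq_iff abs_if split: if_splits)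
  have "integrable lborel (\<lambda>t. indicator {-R..R} t *\<^sub>R u t)"
    by (rule integrableI_bounded_set_indicator[where B=B])
      (use R in \<open>auto simp: bound emeasure_lborel_Icc\<close>)
  then have lebesgue: "((\<lambda>t. indicator {-R..R} t *\<^sub>R u t) has_integral integral\<^sup>L lborel u) UNIV"
    using has_integral_integral_lborel u_eq by metis
  have "(u has_integral (v R - v (-R))) {-R..R}"
    using R by (intro fundamental_theorem_of_calculus_interior_strong[OF S])
      (auto intro: deriv continuous_on_subset[OF cont])
  then have "(u has_integral 0) {-R..R}"
    using supp[of R] supp[of "-R"] R by simp
  then have "((\<lambda>t. if t \<in> {-R..R} then u t else 0) has_integral 0) UNIV"
    by (subst has_integral_restrict_UNIV)
  then have "((\<lambda>t. indicator {-R..R} t *\<^sub>R u t) has_integral 0) UNIV"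
    by (simp only: indicator_scaleR_eq_if)
  with lebesgue show ?thesis
    using has_integral_unique by metis
qed

lemma PiM_integral_partial_derivative_eq_0:
  fixes U V :: "(nat \<Rightarrow> real) \<Rightarrow> complex"
  assumes I: "finite I" and j: "j \<in> I" and R: "R > 0"
    and int: "integrable (PiM I (\<lambda>_. lborel)) U"
    and bound: "\<And>y. norm (U y) \<le> B"
    and cont: "\<And>x. continuous_on UNIV (\<lambda>t. V (x(j:=t)))"
    and S: "\<And>x. finite (S x)"
    and deriv: "\<And>x t. t \<notin> S x \<Longrightarrow> ((\<lambda>t. V (x(j:=t))) has_vector_derivative U (x(j:=t))) (at t)"
    and supp: "\<And>x t. \<bar>t\<bar> \<ge> R \<Longrightarrow> V (x(j:=t)) = 0 \<and> U (x(j:=t)) = 0"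
  shows "integral\<^sup>L (PiM I (\<lambda>_. lborel)) U = 0"
proof -
  have I_eq: "I = insert j (I - {j})"
    using j by auto
  have U_meas: "U \<in> borel_measurable (PiM (insert j (I - {j})) (\<lambda>_. lborel))"
    using int I_eq by auto
  have line_integral: "(\<integral>t. U (x(j:=t)) \<partial>lborel) = 0"
    if x: "x \<in> space (PiM (I - {j}) (\<lambda>_. lborel))" for x
  proof (rule lborel_integral_derivative_eq_0[OF R _ bound cont S deriv supp])
    show "(\<lambda>t. U (x(j := t))) \<in> borel_measurable lborel"
      using measurable_comp[OF measurable_component_update U_meas, OF x]
      by (simp add: comp_def fun_upd_def)
  qed
  have "integral\<^sup>L (PiM I (\<lambda>_. lborel)) U
      = (\<integral>x. (\<integral>t. U (x(j:=t)) \<partial>lborel) \<partial>PiM (I - {j}) (\<lambda>_. lborel))"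
    using I int I_eq by (subst I_eq) (intro lborel_prod.product_integral_insert, auto)
  also have "\<dots> = 0"
    using line_integral by (simp add: Bochner_Integration.integral_cong[OF refl, of _ _ "\<lambda>_. 0"])
  finally show ?thesis .
qed

section \<open>Polynomials in finitely many real variables\<close>

definition monomial_fun :: "nat set \<Rightarrow> (nat \<Rightarrow> nat) \<Rightarrow> (nat \<Rightarrow> real) \<Rightarrow> real" where
  "monomial_fun I e x = (\<Prod>i\<in>I. x i ^ e i)"

text \<open>The monomials of a polynomial are indexed by a set of labels \<open>\<gamma>\<close> with exponent vectors
  \<open>e \<gamma>\<close>, so that partial derivatives are again polynomials of this form over the same labels.\<close>

definition poly_fun ::
  "nat set \<Rightarrow> (nat \<Rightarrow> nat) set \<Rightarrow> ((nat \<Rightarrow> nat) \<Rightarrow> complex) \<Rightarrow> ((nat \<Rightarrow> nat) \<Rightarrow> (nat \<Rightarrow> nat))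
     \<Rightarrow> (nat \<Rightarrow> real) \<Rightarrow> complex" where
  "poly_fun I Bs a e x = (\<Sum>\<gamma>\<in>Bs. a \<gamma> * complex_of_real (monomial_fun I (e \<gamma>) x))"

definition deriv_coeffs ::
  "nat \<Rightarrow> ((nat \<Rightarrow> nat) \<Rightarrow> complex) \<Rightarrow> ((nat \<Rightarrow> nat) \<Rightarrow> (nat \<Rightarrow> nat)) \<Rightarrow> (nat \<Rightarrow> nat) \<Rightarrow> complex" where
  "deriv_coeffs j a e = (\<lambda>\<gamma>. a \<gamma> * of_nat (e \<gamma> j))"

definition deriv_exps :: "nat \<Rightarrow> ((nat \<Rightarrow> nat) \<Rightarrow> (nat \<Rightarrow> nat)) \<Rightarrow> (nat \<Rightarrow> nat) \<Rightarrow> (nat \<Rightarrow> nat)" where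
  "deriv_exps j e = (\<lambda>\<gamma>. (e \<gamma>)(j := e \<gamma> j - 1))"

lemma monomial_fun_remove:
  assumes "finite I" "j \<in> I"
  shows "monomial_fun I e x = x j ^ e j * monomial_fun (I - {j}) e x"
  unfolding monomial_fun_def using assms by (subst prod.remove[of _ j]) auto

lemma monomial_fun_cong:
  "(\<And>i. i \<in> I \<Longrightarrow> x i ^ e i = y i ^ e' i) \<Longrightarrow> monomial_fun I e x = monomial_fun I e' y"
  unfolding monomial_fun_def by (rule prod.cong) auto

lemma monomial_fun_upd:
  assumes "finite I" "j \<in> I"
  shows "monomial_fun I e (x(j:=t)) = t ^ e j * monomial_fun (I - {j}) e x"
  using monomial_fun_remove[OF assms, of e "x(j:=t)"] monomial_fun_cong[of "I - {j}" "x(j:=t)" e x e]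
  by simp

lemma has_real_derivative_monomial_fun:
  assumes "finite I" "j \<in> I"
  shows "((\<lambda>t. monomial_fun I e (x(j:=t))) has_real_derivative
           of_nat (e j) * monomial_fun I (e(j := e j - 1)) (x(j:=t))) (at t)"
proof -
  have "monomial_fun (I - {j}) (e(j := e j - 1)) x = monomial_fun (I - {j}) e x"
    by (rule monomial_fun_cong) auto
  moreover have "((\<lambda>t. t ^ e j * monomial_fun (I - {j}) e x) has_real_derivative
                   (of_nat (e j) * t ^ (e j - 1)) * monomial_fun (I - {j}) e x) (at t)"
    by (intro DERIV_cmult_right) (use DERIV_pow[of "e j" t UNIV] in simp)
  ultimately show ?thesis
    unfolding monomial_fun_upd[OF assms] by (simp add: mult.assoc)
qed

lemma has_vector_derivative_poly_fun:
  assumes "finite I" "j \<in> I"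
  shows "((\<lambda>t. poly_fun I Bs a e (x(j:=t))) has_vector_derivative
           poly_fun I Bs (deriv_coeffs j a e) (deriv_exps j e) (x(j:=t))) (at t)"
  unfolding poly_fun_def deriv_coeffs_def deriv_exps_def
  by (rule has_vector_derivative_eq_rhs[OF has_vector_derivative_sum[OF
        has_vector_derivative_mult[OF has_vector_derivative_const
          has_vector_derivative_of_real[OF has_real_derivative_monomial_fun[OF assms]]]]])
    (auto intro!: sum.cong)

lemma poly_fun_cnj: "poly_fun I Bs (\<lambda>\<gamma>. cnj (a \<gamma>)) e x = cnj (poly_fun I Bs a e x)"
  unfolding poly_fun_def by (simp add: cnj_sum)

lemma deriv_coeffs_cnj: "deriv_coeffs j (\<lambda>\<gamma>. cnj (a \<gamma>)) e = (\<lambda>\<gamma>. cnj (deriv_coeffs j a e \<gamma>))"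
  unfolding deriv_coeffs_def by auto

lemma monomial_fun_euler:
  assumes "finite I" "j \<in> I"
  shows "of_nat (e j) * x j * monomial_fun I (e(j := e j - 1)) x = of_nat (e j) * monomial_fun I e x"
proof (cases "e j")
  case (Suc m)
  have "monomial_fun (I - {j}) (e(j := e j - 1)) x = monomial_fun (I - {j}) e x"
    by (rule monomial_fun_cong) auto
  then show ?thesis
    using monomial_fun_remove[OF assms, of "e(j := e j - 1)"] monomial_fun_remove[OF assms, of e] Suc
    by simp
qed simp

lemma poly_fun_euler:
  assumes I: "finite I" and deg: "\<And>\<gamma>. \<gamma> \<in> Bs \<Longrightarrow> (\<Sum>j\<in>I. e \<gamma> j) = k"
  shows "(\<Sum>j\<in>I. complex_of_real (x j) * poly_fun I Bs (deriv_coeffs j a e) (deriv_exps j e) x)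
       = of_nat k * poly_fun I Bs a e x"
proof -
  have monomial_euler: "(\<Sum>j\<in>I. complex_of_real (x j) *
          (a \<gamma> * of_nat (e \<gamma> j) * complex_of_real (monomial_fun I ((e \<gamma>)(j := e \<gamma> j - 1)) x)))
      = a \<gamma> * (of_nat k * complex_of_real (monomial_fun I (e \<gamma>) x))" if "\<gamma> \<in> Bs" for \<gamma>
  proof -
    have "(\<Sum>j\<in>I. complex_of_real (x j) *
            (a \<gamma> * of_nat (e \<gamma> j) * complex_of_real (monomial_fun I ((e \<gamma>)(j := e \<gamma> j - 1)) x)))
        = a \<gamma> * (\<Sum>j\<in>I. complex_of_real
            (of_nat (e \<gamma> j) * x j * monomial_fun I ((e \<gamma>)(j := e \<gamma> j - 1)) x))"
      by (simp add: sum_distrib_left mult_ac)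
    also have "\<dots> = a \<gamma> * (\<Sum>j\<in>I. complex_of_real (of_nat (e \<gamma> j) * monomial_fun I (e \<gamma>) x))"
      using I by (intro arg_cong2[where f="(*)"] sum.cong refl) (simp only: monomial_fun_euler)
    also have "\<dots> = a \<gamma> * (of_nat k * complex_of_real (monomial_fun I (e \<gamma>) x))"
      using deg[OF that] by (simp add: sum_distrib_right[symmetric] flip: of_nat_sum)
    finally show ?thesis .
  qed
  have "(\<Sum>j\<in>I. complex_of_real (x j) * poly_fun I Bs (deriv_coeffs j a e) (deriv_exps j e) x)
      = (\<Sum>\<gamma>\<in>Bs. \<Sum>j\<in>I. complex_of_real (x j) *
          (a \<gamma> * of_nat (e \<gamma> j) * complex_of_real (monomial_fun I ((e \<gamma>)(j := e \<gamma> j - 1)) x)))"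
    unfolding poly_fun_def deriv_coeffs_def deriv_exps_def sum_distrib_left by (rule sum.swap)
  also have "\<dots> = (\<Sum>\<gamma>\<in>Bs. a \<gamma> * (of_nat k * complex_of_real (monomial_fun I (e \<gamma>) x)))"
    by (rule sum.cong[OF refl monomial_euler])
  also have "\<dots> = of_nat k * poly_fun I Bs a e x"
    unfolding poly_fun_def by (simp add: sum_distrib_left mult_ac)
  finally show ?thesis .
qed

lemma monomial_fun_divide:
  "monomial_fun I e (\<lambda>i. x i / r) = monomial_fun I e x / r ^ (\<Sum>i\<in>I. e i)"
  unfolding monomial_fun_def by (simp add: power_divide prod_dividef power_sum)

lemma poly_fun_divide:
  assumes "\<And>\<gamma>. \<gamma> \<in> Bs \<Longrightarrow> (\<Sum>i\<in>I. \<gamma> i) = k"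
  shows "poly_fun I Bs a (\<lambda>\<gamma>. \<gamma>) (\<lambda>i. x i / r) = poly_fun I Bs a (\<lambda>\<gamma>. \<gamma>) x / of_real r ^ k"
  unfolding poly_fun_def monomial_fun_divide using assms by (simp add: sum_divide_distrib)

lemma abs_monomial_fun_le_1:
  assumes "\<And>i. i \<in> I \<Longrightarrow> \<bar>x i\<bar> \<le> 1"
  shows "\<bar>monomial_fun I e x\<bar> \<le> 1"
  unfolding monomial_fun_def abs_prod using assms
  by (intro prod_le_1) (auto simp: power_abs intro: power_le_one)

lemma norm_poly_fun_le:
  assumes "\<And>i. i \<in> I \<Longrightarrow> \<bar>x i\<bar> \<le> 1"
  shows "norm (poly_fun I Bs a e x) \<le> (\<Sum>\<gamma>\<in>Bs. norm (a \<gamma>))"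
  unfolding poly_fun_def
  by (rule order.trans[OF norm_sum], intro sum_mono)
    (auto simp: norm_mult intro!: mult_left_le[OF abs_monomial_fun_le_1[OF assms]])

lemma poly_fun_restrict: "poly_fun I Bs a e (restrict x I) = poly_fun I Bs a e x"
proof -
  have "monomial_fun I e' (restrict x I) = monomial_fun I e' x" for e'
    by (rule monomial_fun_cong) auto
  then show ?thesis
    unfolding poly_fun_def by simp
qed

lemma measurable_poly_fun [measurable]:
  "poly_fun I Bs a e \<in> borel_measurable (PiM J (\<lambda>_::nat. lborel :: real measure))"
  unfolding poly_fun_def monomial_fun_def by measurable

section \<open>Complex linear forms\<close>

definition linform :: "nat set \<Rightarrow> (nat \<Rightarrow> complex) \<Rightarrow> (nat \<Rightarrow> real) \<Rightarrow> complex" where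
  "linform I b x = (\<Sum>i\<in>I. complex_of_real (x i) * b i)"

lemma linform_upd:
  assumes "finite I" "j \<in> I"
  shows "linform I b (x(j:=t)) = linform I b x + complex_of_real (t - x j) * b j"
proof -
  have "linform I b (x(j:=t)) = of_real t * b j + (\<Sum>i\<in>I - {j}. complex_of_real (x i) * b i)"
    unfolding linform_def using assms by (subst sum.remove[of _ j]) (auto intro!: sum.cong)
  moreover have "linform I b x = of_real (x j) * b j + (\<Sum>i\<in>I - {j}. complex_of_real (x i) * b i)"
    unfolding linform_def using assms by (subst sum.remove[of _ j]) auto
  ultimately show ?thesis by (simp add: algebra_simps)
qed

lemma has_vector_derivative_linform_power:
  assumes "finite I" "j \<in> I"
  shows "((\<lambda>t. linform I b (x(j:=t)) ^ l) has_vector_derivative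
           of_nat l * linform I b (x(j:=t)) ^ (l - 1) * b j) (at t)"
proof -
  have "((\<lambda>t. linform I b (x(j:=t))) has_vector_derivative b j) (at t)"
    unfolding linform_upd[OF assms]
    by (rule has_vector_derivative_eq_rhs) (auto intro!: derivative_eq_intros)
  from field_vector_diff_chain_at[OF this DERIV_power[OF DERIV_ident]]
  show ?thesis by (simp add: o_def algebra_simps)
qed

lemma has_vector_derivative_linform_power_deriv:
  assumes "finite I" "j \<in> I"
  shows "((\<lambda>t. of_nat l * linform I b (x(j:=t)) ^ (l - 1) * b j) has_vector_derivative
            of_nat l * of_nat (l - 1) * linform I b (x(j:=t)) ^ (l - 2) * (b j)\<^sup>2) (at t)"
proof -
  have "((\<lambda>t. linform I b (x(j:=t)) ^ (l - 1) * b j) has_vector_derivative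
          (of_nat (l - 1) * linform I b (x(j:=t)) ^ (l - 1 - 1) * b j) * b j) (at t)"
    using has_vector_derivative_mult[OF has_vector_derivative_linform_power[OF assms, of b x "l - 1" t]
        has_vector_derivative_const[of "b j"]]
    by simp
  from has_vector_derivative_mult[OF has_vector_derivative_const[of "of_nat l"] this]
  show ?thesis
    by (simp add: mult_ac power2_eq_square numeral_2_eq_2)
qed

lemma linform_divide: "linform I b (\<lambda>i. x i / r) = linform I b x / of_real r"
  unfolding linform_def by (simp add: sum_divide_distrib)

lemma linform_restrict: "linform I b (restrict x I) = linform I b x"
  unfolding linform_def by (intro sum.cong) auto

lemma norm_linform_le:
  assumes "\<And>i. i \<in> I \<Longrightarrow> \<bar>x i\<bar> \<le> 1"
  shows "norm (linform I b x) \<le> (\<Sum>i\<in>I. norm (b i))"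
  unfolding linform_def
  by (rule order.trans[OF norm_sum], intro sum_mono)
    (auto simp: norm_mult intro!: mult_left_le_one_le assms)

lemma measurable_linform [measurable]:
  "linform I b \<in> borel_measurable (PiM J (\<lambda>_::nat. lborel :: real measure))"
  unfolding linform_def by measurable

section \<open>A radial cutoff\<close>

definition radial_primitive :: "nat \<Rightarrow> real \<Rightarrow> real" where
  "radial_primitive d u = (if d = 2 then ln u / 2 else u powr (1 - real d / 2) / (2 - real d))"

definition radial_cutoff :: "nat \<Rightarrow> real \<Rightarrow> real" where
  "radial_cutoff d s = radial_primitive d (max (1/4) (min s 1)) - radial_primitive d 1"

definition radial_cutoff_deriv :: "nat \<Rightarrow> real \<Rightarrow> real" where
  "radial_cutoff_deriv d s = (if 1/4 < s \<and> s \<le> 1 then s powr (- (real d / 2)) / 2 else 0)"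

lemma has_real_derivative_radial_primitive:
  assumes "u > 0"
  shows "(radial_primitive d has_real_derivative u powr (- (real d / 2)) / 2) (at u)"
proof (cases "d = 2")
  case True
  have "((\<lambda>u. ln u / 2) has_real_derivative inverse u / 2) (at u)"
    using assms by (auto intro!: derivative_eq_intros simp: field_simps)
  moreover have "radial_primitive d = (\<lambda>u. ln u / 2)"
    using True by (simp add: radial_primitive_def fun_eq_iff)
  ultimately show ?thesis
    using True assms by (simp add: powr_minus)
next
  case False
  have "((\<lambda>u. u powr (1 - real d / 2) / (2 - real d)) has_real_derivative
          (1 - real d / 2) * u powr (1 - real d / 2 - 1) / (2 - real d)) (at u)"
    using DERIV_cdivide[OF has_real_derivative_powr[OF assms, of "1 - real d / 2"], of "2 - real d"]
    by simp
  moreover have "(1 - real d / 2) * u powr (1 - real d / 2 - 1) / (2 - real d) = u powr (- (real d / 2)) / 2"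
    using False by (simp add: field_simps)
  moreover have "radial_primitive d = (\<lambda>u. u powr (1 - real d / 2) / (2 - real d))"
    using False by (simp add: radial_primitive_def fun_eq_iff)
  ultimately show ?thesis
    by (metis DERIV_cong)
qed

lemma has_real_derivative_radial_cutoff:
  assumes "s \<noteq> 1/4" "s \<noteq> 1"
  shows "(radial_cutoff d has_real_derivative radial_cutoff_deriv d s) (at s)"
proof -
  consider "s < 1/4" | "1/4 < s \<and> s < 1" | "1 < s"
    using assms by linarith
  then show ?thesis
  proof cases
    case 1
    have "((\<lambda>_. radial_primitive d (1/4) - radial_primitive d 1) has_real_derivative
            radial_cutoff_deriv d s) (at s)"
      using 1 by (simp add: radial_cutoff_deriv_def)
    then show ?thesis
      by (rule has_field_derivative_transform_within_open[where S="{..<1/4}"])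
        (use 1 in \<open>auto simp: radial_cutoff_def\<close>)
  next
    case 2
    have "((\<lambda>s. radial_primitive d s - radial_primitive d 1) has_real_derivative
            radial_cutoff_deriv d s) (at s)"
      using has_real_derivative_radial_primitive[of s d] 2
      by (auto intro!: derivative_eq_intros simp: radial_cutoff_deriv_def)
    then show ?thesis
      by (rule has_field_derivative_transform_within_open[where S="{1/4<..<1}"])
        (use 2 in \<open>auto simp: radial_cutoff_def\<close>)
  next
    case 3
    have "((\<lambda>_. 0) has_real_derivative radial_cutoff_deriv d s) (at s)"
      using 3 by (simp add: radial_cutoff_deriv_def)
    then show ?thesis
      by (rule has_field_derivative_transform_within_open[where S="{1<..}"])
        (use 3 in \<open>auto simp: radial_cutoff_def\<close>)
  qed
qed

lemma continuous_on_radial_cutoff: "continuous_on UNIV (radial_cutoff d)"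
proof -
  have "continuous_on {0<..} (radial_primitive d)"
    by (intro continuous_at_imp_continuous_on ballI
        DERIV_isCont[OF has_real_derivative_radial_primitive]) simp
  then have "continuous_on UNIV (\<lambda>s. radial_primitive d (max (1/4) (min s 1)))"
    by (rule continuous_on_compose2[of _ _ _ "\<lambda>s. max (1/4) (min s (1::real))"])
      (auto intro!: continuous_intros)
  then show ?thesis
    unfolding radial_cutoff_def by (intro continuous_intros)
qed

lemma radial_cutoff_eq_0: "s \<ge> 1 \<Longrightarrow> radial_cutoff d s = 0"
  by (simp add: radial_cutoff_def)

lemma radial_cutoff_bounded: "\<exists>B. \<forall>s. \<bar>radial_cutoff d s\<bar> \<le> B"
proof -
  have "compact (radial_cutoff d ` {1/4..1})"
    by (intro compact_continuous_image continuous_on_subset[OF continuous_on_radial_cutoff]) auto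
  then obtain B where B: "\<forall>y\<in>radial_cutoff d ` {1/4..1}. norm y \<le> B"
    using compact_imp_bounded bounded_iff by metis
  have "\<bar>radial_cutoff d s\<bar> \<le> B" for s
  proof -
    have "radial_cutoff d s = radial_cutoff d (max (1/4) (min s 1))"
      by (simp add: radial_cutoff_def)
    then show ?thesis
      using B by auto
  qed
  then show ?thesis
    by blast
qed

lemma abs_radial_cutoff_deriv_le: "\<bar>radial_cutoff_deriv d s\<bar> \<le> (1/4) powr (- (real d / 2)) / 2"
  by (auto simp: radial_cutoff_deriv_def intro: powr_mono2')

lemma measurable_radial_cutoff [measurable]: "radial_cutoff d \<in> borel_measurable borel"
  by (rule borel_measurable_continuous_onI[OF continuous_on_radial_cutoff])

lemma measurable_radial_cutoff_deriv [measurable]: "radial_cutoff_deriv d \<in> borel_measurable borel"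
  unfolding radial_cutoff_deriv_def by measurable

section \<open>The unit sphere and the unit ball of \<open>\<real>\<^sup>n\<^sup>+\<^sup>1\<close>\<close>

definition coords :: "nat \<Rightarrow> nat set" where
  "coords n = {1..n+1}"

lemma finite_coords [simp]: "finite (coords n)"
  by (simp add: coords_def)

lemma sqnorm_coords: "sqnorm n x = (\<Sum>i\<in>coords n. (x i)\<^sup>2)"
  by (simp add: sqnorm_def coords_def)

lemma Rn_coords: "Rn n = PiM (coords n) (\<lambda>_. lborel)"
  by (simp add: Rn_def coords_def)

lemma sqnorm_upd:
  assumes "j \<in> coords n"
  shows "sqnorm n (x(j:=t)) = t\<^sup>2 + (\<Sum>i\<in>coords n - {j}. (x i)\<^sup>2)"
  unfolding sqnorm_coords using assms by (subst sum.remove[of _ j]) (auto intro!: sum.cong)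

lemma sqnorm_nonneg: "sqnorm n x \<ge> 0"
  unfolding sqnorm_coords by (intro sum_nonneg) simp

lemma coord_square_le_sqnorm: "i \<in> coords n \<Longrightarrow> (x i)\<^sup>2 \<le> sqnorm n x"
  unfolding sqnorm_coords by (intro member_le_sum) auto

lemma abs_coord_le_1: "i \<in> coords n \<Longrightarrow> sqnorm n x \<le> 1 \<Longrightarrow> \<bar>x i\<bar> \<le> 1"
  using coord_square_le_sqnorm[of i n x] abs_square_le_1[of "x i"] by simp

lemma abs_nrm_coord_le_1:
  assumes "i \<in> coords n"
  shows "\<bar>nrm n x i\<bar> \<le> 1"
proof (cases "sqnorm n x = 0")
  case False
  then have "sqnorm n x > 0"
    using sqnorm_nonneg[of n x] by simp
  moreover have "\<bar>x i\<bar> \<le> sqrt (sqnorm n x)"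
    using coord_square_le_sqnorm[OF assms, of x] by (simp add: real_le_rsqrt)
  ultimately show ?thesis
    using assms by (simp add: nrm_def divide_le_eq_1 abs_div coords_def)
qed (use assms in \<open>simp add: nrm_def coords_def\<close>)

lemma nrm_in_Sph:
  assumes "sqnorm n x \<noteq> 0"
  shows "nrm n x \<in> Sph n"
proof -
  have pos: "sqnorm n x > 0"
    using assms sqnorm_nonneg[of n x] by simp
  have "sqnorm n (nrm n x) = (\<Sum>j\<in>coords n. (x j / sqrt (sqnorm n x))\<^sup>2)"
    unfolding sqnorm_coords[of n "nrm n x"] by (intro sum.cong) (auto simp: nrm_def coords_def)
  also have "\<dots> = (\<Sum>j\<in>coords n. (x j)\<^sup>2) / sqnorm n x"
    using pos by (simp add: power_divide sum_divide_distrib)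
  also have "\<dots> = 1"
    using pos by (simp flip: sqnorm_coords)
  finally show ?thesis
    unfolding Sph_def by (auto simp: nrm_def)
qed

lemma nrm_zero: "sqnorm n x = 0 \<Longrightarrow> nrm n x = restrict (\<lambda>_. 0) (coords n)"
  by (auto simp: nrm_def coords_def fun_eq_iff)

lemma sqnorm_dilate: "sqnorm n (dilate (coords n) c x) = c\<^sup>2 * sqnorm n x"
  unfolding sqnorm_coords dilate_def by (simp add: sum_distrib_left power_mult_distrib)

lemma dilate_in_space_Rn [simp]: "dilate (coords n) c x \<in> space (Rn n)"
  by (simp add: dilate_def Rn_coords space_PiM)

lemma nrm_dilate: "c > 0 \<Longrightarrow> nrm n (dilate (coords n) c x) = nrm n x"
  unfolding nrm_def sqnorm_dilate by (auto simp: dilate_def coords_def real_sqrt_mult fun_eq_iff)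

lemma finite_square_level: "finite {t::real. t\<^sup>2 + C = r}"
proof (rule finite_subset)
  show "{t::real. t\<^sup>2 + C = r} \<subseteq> {sqrt (r - C), - sqrt (r - C)}"
    using real_sqrt_abs[of t for t] by (auto simp: abs_if split: if_splits)
qed simp

lemma measurable_sqnorm [measurable]:
  "sqnorm n \<in> borel_measurable (PiM J (\<lambda>_::nat. lborel :: real measure))"
  unfolding sqnorm_def by measurable

lemma measurable_nrm [measurable]:
  "nrm n \<in> PiM (coords n) (\<lambda>_. lborel) \<rightarrow>\<^sub>M PiM (coords n) (\<lambda>_::nat. lborel :: real measure)"
  unfolding nrm_def coords_def by measurable

lemma measurable_cnj [measurable (raw)]:
  "f \<in> borel_measurable M \<Longrightarrow> (\<lambda>x. cnj (f x :: complex)) \<in> borel_measurable M"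
  using measurable_compose[OF _ borel_measurable_continuous_onI[OF continuous_on_cnj[OF continuous_on_id]]]
  by blast

lemma sets_unit_ball_n [measurable]: "unit_ball_n n \<in> sets (Rn n)"
  unfolding unit_ball_n_def Rn_def by measurable

lemma emeasure_unit_ball_n_finite: "emeasure (Rn n) (unit_ball_n n) < \<infinity>"
proof -
  have "unit_ball_n n \<subseteq> Pi\<^sub>E (coords n) (\<lambda>_. {-1..1})"
    using abs_coord_le_1 by (auto simp: unit_ball_n_def Rn_coords space_PiM PiE_def Pi_def abs_le_iff)
  then have "emeasure (Rn n) (unit_ball_n n) \<le> emeasure (Rn n) (Pi\<^sub>E (coords n) (\<lambda>_. {-1..1}))"
    by (intro emeasure_mono) (auto simp: Rn_coords intro!: sets_PiM_I_finite)
  also have "\<dots> = (\<Prod>i\<in>coords n. emeasure lborel {-1..(1::real)})"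
    unfolding Rn_coords by (subst lborel_prod.emeasure_PiM) auto
  also have "\<dots> < \<infinity>"
    by (simp add: emeasure_lborel_Icc power_less_top_ennreal)
  finally show ?thesis .
qed

definition quarter_ball_n :: "nat \<Rightarrow> (nat \<Rightarrow> real) set" where
  "quarter_ball_n n = {x \<in> space (Rn n). sqnorm n x \<le> 1/4}"

lemma sets_quarter_ball_n [measurable]: "quarter_ball_n n \<in> sets (Rn n)"
  unfolding quarter_ball_n_def Rn_coords by measurable

lemma quarter_ball_n_subset: "quarter_ball_n n \<subseteq> unit_ball_n n"
  by (auto simp: quarter_ball_n_def unit_ball_n_def)

lemma emeasure_quarter_ball_n_finite: "emeasure (Rn n) (quarter_ball_n n) < \<infinity>"
  using emeasure_mono[OF quarter_ball_n_subset sets_unit_ball_n] emeasure_unit_ball_n_finite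
  by (rule le_less_trans)

lemma AE_sqnorm_nonzero: "AE x in Rn n. sqnorm n x \<noteq> 0"
proof (rule AE_I')
  have "emeasure (Rn n) (Pi\<^sub>E (coords n) (\<lambda>_. {0})) = 0"
    unfolding Rn_coords by (subst lborel_prod.emeasure_PiM) (auto simp: coords_def)
  moreover have "Pi\<^sub>E (coords n) (\<lambda>_. {0::real}) \<in> sets (Rn n)"
    unfolding Rn_coords by (rule sets_PiM_I_finite) auto
  ultimately show "Pi\<^sub>E (coords n) (\<lambda>_. {0}) \<in> null_sets (Rn n)"
    by (rule null_setsI)
  have "x i = 0" if "sqnorm n x = 0" "i \<in> coords n" for x i
    using coord_square_le_sqnorm[OF that(2), of x] that(1) by simp
  then show "{x \<in> space (Rn n). \<not> sqnorm n x \<noteq> 0} \<subseteq> Pi\<^sub>E (coords n) (\<lambda>_. {0})"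
    by (auto simp: Rn_coords space_PiM PiE_def extensional_def fun_eq_iff)
qed

lemma bounded_mult_comp:
  fixes f g :: "'a \<Rightarrow> 'b::real_normed_algebra"
  assumes "bounded (f ` S)" "bounded (g ` S)"
  shows "bounded ((\<lambda>x. f x * g x) ` S)"
proof -
  obtain A B where A: "\<And>x. x \<in> S \<Longrightarrow> norm (f x) \<le> A" and B: "\<And>x. x \<in> S \<Longrightarrow> norm (g x) \<le> B"
    using assms by (auto simp: bounded_iff)
  have "norm (f x * g x) \<le> A * B" if "x \<in> S" for x
    using A[OF that] B[OF that]
    by (intro order.trans[OF norm_mult_ineq] mult_mono) (auto intro: order.trans[OF norm_ge_zero])
  then show ?thesis
    by (auto simp: bounded_iff)
qed

lemma bounded_const_comp: "bounded ((\<lambda>_. c) ` S)"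
  by (rule bounded_subset[of "{c}"]) auto

lemma bounded_power_comp:
  fixes f :: "'a \<Rightarrow> 'b::real_normed_algebra_1"
  shows "bounded (f ` S) \<Longrightarrow> bounded ((\<lambda>x. f x ^ m) ` S)"
  by (induction m) (auto intro: bounded_mult_comp bounded_const_comp)

section \<open>Orthogonality of powers of isotropic linear forms to spherical harmonics\<close>

definition isotropic :: "nat set \<Rightarrow> (nat \<Rightarrow> complex) \<Rightarrow> bool" where
  "isotropic I b \<longleftrightarrow> (\<Sum>j\<in>I. (b j)\<^sup>2) = 0"

definition poly_laplacian ::
  "nat set \<Rightarrow> (nat \<Rightarrow> nat) set \<Rightarrow> ((nat \<Rightarrow> nat) \<Rightarrow> complex) \<Rightarrow> (nat \<Rightarrow> real) \<Rightarrow> complex" where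
  "poly_laplacian I Bs c x = (\<Sum>j\<in>I. poly_fun I Bs
      (deriv_coeffs j (deriv_coeffs j c (\<lambda>\<gamma>. \<gamma>)) (deriv_exps j (\<lambda>\<gamma>. \<gamma>))) (deriv_exps j (deriv_exps j (\<lambda>\<gamma>. \<gamma>))) x)"

text \<open>Orthogonality is proved with the divergence theorem for \<open>(P \<nabla>Q - Q \<nabla>P) W(|x|\<^sup>2)\<close>, where
  \<open>P = (x \<cdot> b)\<^sup>l\<close>, \<open>Q\<close> is the conjugate of the harmonic polynomial representing \<open>Y\<close>, and \<open>W\<close> is
  the radial cutoff with \<open>W'(s) = s\<^sup>-\<^sup>(\<^sup>k\<^sup>+\<^sup>l\<^sup>)\<^sup>/\<^sup>2 / 2\<close> on the shell \<open>1/4 < s \<le> 1\<close>. As \<open>P\<close> and \<open>Q\<close> are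
  harmonic, Euler's identity makes the divergence equal to \<open>(k - l)\<close> times the indicator of the
  shell times \<open>G(x) = P(x/|x|) Q(x/|x|)\<close>. Since \<open>G\<close> is homogeneous of degree \<open>0\<close>, its integral
  over the ball of radius \<open>1/2\<close> is \<open>2\<^sup>-\<^sup>(\<^sup>n\<^sup>+\<^sup>1\<^sup>)\<close> times its integral over the unit ball, so the
  vanishing of the shell integral forces the latter to vanish; by the cone formula that is the
  inner product on the sphere.\<close>

locale harmonic_orthogonality =
  fixes n k l :: nat and Bs :: "(nat \<Rightarrow> nat) set" and c :: "(nat \<Rightarrow> nat) \<Rightarrow> complex"
    and b :: "nat \<Rightarrow> complex"
  assumes homogeneous: "\<And>\<gamma>. \<gamma> \<in> Bs \<Longrightarrow> (\<Sum>i\<in>coords n. \<gamma> i) = k"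
    and harmonic: "\<And>x. poly_laplacian (coords n) Bs c x = 0"
    and isotropic: "isotropic (coords n) b"
    and degree_ne: "l \<noteq> k"
begin

definition "P x = linform (coords n) b x ^ l"
definition "dP j x = of_nat l * linform (coords n) b x ^ (l - 1) * b j"
definition "d2P j x = of_nat l * of_nat (l - 1) * linform (coords n) b x ^ (l - 2) * (b j)\<^sup>2"
definition "Q = poly_fun (coords n) Bs (\<lambda>\<gamma>. cnj (c \<gamma>)) (\<lambda>\<gamma>. \<gamma>)"
definition "dQ j = poly_fun (coords n) Bs (deriv_coeffs j (\<lambda>\<gamma>. cnj (c \<gamma>)) (\<lambda>\<gamma>. \<gamma>)) (deriv_exps j (\<lambda>\<gamma>. \<gamma>))"
definition "d2Q j = poly_fun (coords n) Bs
    (deriv_coeffs j (deriv_coeffs j (\<lambda>\<gamma>. cnj (c \<gamma>)) (\<lambda>\<gamma>. \<gamma>)) (deriv_exps j (\<lambda>\<gamma>. \<gamma>)))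
    (deriv_exps j (deriv_exps j (\<lambda>\<gamma>. \<gamma>)))"
definition "W x = complex_of_real (radial_cutoff (l + k) (sqnorm n x))"
definition "dW j x = complex_of_real (2 * x j * radial_cutoff_deriv (l + k) (sqnorm n x))"
definition "flux j x = (P x * dQ j x - Q x * dP j x) * W x"
definition "flux_deriv j x = (P x * d2Q j x - Q x * d2P j x) * W x + (P x * dQ j x - Q x * dP j x) * dW j x"
definition "G x = linform (coords n) b (nrm n x) ^ l * cnj (poly_fun (coords n) Bs c (\<lambda>\<gamma>. \<gamma>) (nrm n x))"

lemma measurable_flux_deriv [measurable]: "flux_deriv j \<in> borel_measurable (Rn n)"
  unfolding flux_deriv_def P_def Q_def dP_def d2P_def dQ_def d2Q_def W_def dW_def Rn_coords
  by measurable

lemma measurable_G [measurable]: "G \<in> borel_measurable (Rn n)"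
  unfolding G_def Rn_coords by measurable

lemma has_vector_derivative_flux:
  assumes j: "j \<in> coords n"
    and s: "sqnorm n (x(j:=t)) \<noteq> 1/4" "sqnorm n (x(j:=t)) \<noteq> 1"
  shows "((\<lambda>t. flux j (x(j:=t))) has_vector_derivative flux_deriv j (x(j:=t))) (at t)"
proof -
  define C where "C = (\<Sum>i\<in>coords n - {j}. (x i)\<^sup>2)"
  have sq: "sqnorm n (x(j:=s)) = s\<^sup>2 + C" for s
    unfolding C_def by (rule sqnorm_upd[OF j])
  have "((\<lambda>s. radial_cutoff (l + k) (s\<^sup>2 + C)) has_real_derivative
          radial_cutoff_deriv (l + k) (t\<^sup>2 + C) * (2 * t)) (at t)"
    by (rule DERIV_chain2[OF has_real_derivative_radial_cutoff])
      (use s sq in \<open>auto intro!: derivative_eq_intros\<close>)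
  then have "((\<lambda>t. W (x(j:=t))) has_vector_derivative dW j (x(j:=t))) (at t)"
    unfolding W_def dW_def sq
    by (rule has_vector_derivative_of_real[THEN has_vector_derivative_eq_rhs]) (simp add: mult_ac)
  then show ?thesis
    unfolding flux_def flux_deriv_def P_def dP_def d2P_def Q_def dQ_def d2Q_def
    by (rule has_vector_derivative_eq_rhs[OF has_vector_derivative_mult[OF
          has_vector_derivative_diff[OF
            has_vector_derivative_mult[OF has_vector_derivative_linform_power[OF finite_coords j]
              has_vector_derivative_poly_fun[OF finite_coords j]]
            has_vector_derivative_mult[OF has_vector_derivative_poly_fun[OF finite_coords j]
              has_vector_derivative_linform_power_deriv[OF finite_coords j]]]]])
      (simp add: algebra_simps)
qed

lemma sum_d2Q: "(\<Sum>j\<in>coords n. d2Q j x) = 0"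
  using harmonic[of x]
  unfolding d2Q_def poly_laplacian_def by (simp add: deriv_coeffs_cnj poly_fun_cnj flip: cnj_sum)

lemma sum_d2P: "(\<Sum>j\<in>coords n. d2P j x) = 0"
  using isotropic unfolding d2P_def isotropic_def by (simp flip: sum_distrib_left)

lemma euler_Q: "(\<Sum>j\<in>coords n. complex_of_real (x j) * dQ j x) = of_nat k * Q x"
  unfolding dQ_def Q_def by (rule poly_fun_euler) (use homogeneous in auto)

lemma euler_P: "(\<Sum>j\<in>coords n. complex_of_real (x j) * dP j x) = of_nat l * P x"
proof (cases "l = 0")
  case False
  then obtain m where m: "l = Suc m"
    using not0_implies_Suc by blast
  have "(\<Sum>j\<in>coords n. complex_of_real (x j) * dP j x)
      = of_nat l * linform (coords n) b x ^ m * (\<Sum>j\<in>coords n. complex_of_real (x j) * b j)"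
    unfolding dP_def using m by (simp add: sum_distrib_left mult_ac)
  then show ?thesis
    unfolding P_def linform_def[symmetric] using m by simp
qed (unfold dP_def, simp)

lemma sum_flux_deriv:
  "(\<Sum>j\<in>coords n. flux_deriv j x)
     = (of_nat k - of_nat l) * P x * Q x * complex_of_real (2 * radial_cutoff_deriv (l + k) (sqnorm n x))"
proof -
  have "(\<Sum>j\<in>coords n. flux_deriv j x)
      = (P x * (\<Sum>j\<in>coords n. d2Q j x) - Q x * (\<Sum>j\<in>coords n. d2P j x)) * W x
        + (P x * (\<Sum>j\<in>coords n. complex_of_real (x j) * dQ j x)
           - Q x * (\<Sum>j\<in>coords n. complex_of_real (x j) * dP j x))
          * complex_of_real (2 * radial_cutoff_deriv (l + k) (sqnorm n x))"
    unfolding flux_deriv_def dW_def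
    by (simp add: algebra_simps sum.distrib sum_subtractf sum_distrib_left sum_distrib_right)
  then show ?thesis
    unfolding sum_d2Q sum_d2P euler_Q euler_P by (simp add: algebra_simps)
qed

lemma flux_eq_0: "sqnorm n y > 1 \<Longrightarrow> flux j y = 0"
  unfolding flux_def W_def by (simp add: radial_cutoff_eq_0)

lemma flux_deriv_eq_0: "sqnorm n y > 1 \<Longrightarrow> flux_deriv j y = 0"
  unfolding flux_deriv_def W_def dW_def by (simp add: radial_cutoff_eq_0 radial_cutoff_deriv_def)

lemma flux_deriv_bounded:
  assumes j: "j \<in> coords n"
  shows "\<exists>B. \<forall>y. norm (flux_deriv j y) \<le> B"
proof -
  let ?S = "{y. sqnorm n y \<le> 1}"
  have coord: "\<bar>y i\<bar> \<le> 1" if "y \<in> ?S" "i \<in> coords n" for y i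
    using abs_coord_le_1 that by auto
  have linform: "bounded (linform (coords n) b ` ?S)"
    using norm_linform_le coord unfolding bounded_iff by blast
  have poly: "bounded (poly_fun (coords n) Bs a e ` ?S)" for a e
    using norm_poly_fun_le coord unfolding bounded_iff by blast
  obtain BW where "\<forall>s. \<bar>radial_cutoff (l + k) s\<bar> \<le> BW"
    using radial_cutoff_bounded by blast
  then have W: "bounded (W ` ?S)"
    unfolding W_def bounded_iff by auto
  have "norm (dW j y) \<le> 2 * ((1/4) powr (- (real (l + k) / 2)) / 2)" if "y \<in> ?S" for y
    using coord[OF that j] abs_radial_cutoff_deriv_le[of "l + k" "sqnorm n y"]
    unfolding dW_def norm_of_real abs_mult by (intro mult_mono) auto
  then have dW: "bounded (dW j ` ?S)"
    unfolding bounded_iff by blast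
  have "bounded (flux_deriv j ` ?S)"
    unfolding flux_deriv_def P_def dP_def d2P_def Q_def dQ_def d2Q_def
    by (intro bounded_plus_comp bounded_minus_comp bounded_mult_comp bounded_power_comp
        linform poly W dW bounded_const_comp)
  then obtain B where "\<And>y. y \<in> ?S \<Longrightarrow> norm (flux_deriv j y) \<le> B"
    unfolding bounded_iff by blast
  then have "norm (flux_deriv j y) \<le> max B 0" for y
    using flux_deriv_eq_0[of y j] by (cases "sqnorm n y \<le> 1") (auto simp: le_max_iff_disj)
  then show ?thesis
    by blast
qed

lemma integrable_flux_deriv:
  assumes j: "j \<in> coords n"
  shows "integrable (Rn n) (flux_deriv j)"
proof -
  obtain B where B: "\<And>y. norm (flux_deriv j y) \<le> B"
    using flux_deriv_bounded[OF j] by blast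
  show ?thesis
  proof (rule integrableI_bounded_set[OF sets_unit_ball_n measurable_flux_deriv
        emeasure_unit_ball_n_finite])
    show "AE x in Rn n. x \<in> unit_ball_n n \<longrightarrow> norm (flux_deriv j x) \<le> B"
      using B by auto
    show "AE x in Rn n. x \<notin> unit_ball_n n \<longrightarrow> flux_deriv j x = 0"
      by (intro AE_I2) (auto simp: unit_ball_n_def intro!: flux_deriv_eq_0)
  qed
qed

lemma continuous_flux_line:
  assumes j: "j \<in> coords n"
  shows "continuous_on UNIV (\<lambda>t. flux j (x(j:=t)))"
proof -
  have linform: "continuous_on UNIV (\<lambda>t. linform (coords n) b (x(j:=t)))"
    unfolding linform_upd[OF finite_coords j] by (intro continuous_intros)
  have poly: "continuous_on UNIV (\<lambda>t. poly_fun (coords n) Bs a e (x(j:=t)))" for a e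
    by (intro continuous_at_imp_continuous_on ballI
        has_vector_derivative_continuous[OF has_vector_derivative_poly_fun[OF finite_coords j]])
  have W: "continuous_on UNIV (\<lambda>t. W (x(j:=t)))"
    unfolding W_def sqnorm_upd[OF j]
    by (intro continuous_intros continuous_on_compose2[OF continuous_on_radial_cutoff]) auto
  show ?thesis
    unfolding flux_def P_def dP_def Q_def dQ_def
    by (intro continuous_intros linform poly W)
qed

lemma integral_flux_deriv_eq_0:
  assumes j: "j \<in> coords n"
  shows "integral\<^sup>L (Rn n) (flux_deriv j) = 0"
proof -
  define C where "C x = (\<Sum>i\<in>coords n - {j}. (x i)\<^sup>2)" for x :: "nat \<Rightarrow> real"
  have sq: "sqnorm n (x(j:=t)) = t\<^sup>2 + C x" for x t
    unfolding C_def by (rule sqnorm_upd[OF j])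
  obtain B where B: "\<And>y. norm (flux_deriv j y) \<le> B"
    using flux_deriv_bounded[OF j] by blast
  have supp: "flux j (x(j:=t)) = 0 \<and> flux_deriv j (x(j:=t)) = 0" if "2 \<le> \<bar>t\<bar>" for x t
  proof -
    have "4 \<le> t\<^sup>2"
      using that abs_le_square_iff[of 2 t] by simp
    moreover have "C x \<ge> 0"
      unfolding C_def by (intro sum_nonneg) auto
    ultimately show ?thesis
      using flux_eq_0 flux_deriv_eq_0 sq by simp
  qed
  show ?thesis
    unfolding Rn_coords
  proof (rule PiM_integral_partial_derivative_eq_0[OF finite_coords j _ _ B continuous_flux_line[OF j]
        _ has_vector_derivative_flux[OF j] supp])
    show "integrable (PiM (coords n) (\<lambda>_. lborel)) (flux_deriv j)"
      using integrable_flux_deriv[OF j] by (simp add: Rn_coords)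
    show "finite ({t. t\<^sup>2 + C x = 1/4} \<union> {t. t\<^sup>2 + C x = 1})" for x
      using finite_square_level by blast
  qed (auto simp: sq)
qed

lemma G_shell:
  assumes "1/4 < sqnorm n x" "sqnorm n x \<le> 1"
  shows "P x * Q x * complex_of_real (2 * radial_cutoff_deriv (l + k) (sqnorm n x)) = G x"
proof -
  define r where "r = sqrt (sqnorm n x)"
  have r: "r > 0"
    using assms by (simp add: r_def)
  have "r ^ (l + k) = sqnorm n x powr (real (l + k) / 2)"
    using r assms by (simp add: r_def powr_realpow[symmetric] powr_half_sqrt[symmetric] powr_powr)
  then have "sqnorm n x powr (- (real (l + k) / 2)) = inverse (r ^ (l + k))"
    by (simp add: powr_minus)
  then have cutoff: "complex_of_real (2 * radial_cutoff_deriv (l + k) (sqnorm n x))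
      = inverse (of_real r ^ (l + k))"
    using assms by (simp add: radial_cutoff_deriv_def)
  have nrm: "nrm n x = restrict (\<lambda>i. x i / r) (coords n)"
    by (simp add: nrm_def r_def coords_def)
  have "G x = (linform (coords n) b x / of_real r) ^ l * (Q x / of_real r ^ k)"
    unfolding G_def nrm linform_restrict poly_fun_restrict linform_divide Q_def
    by (subst poly_fun_divide[where k=k]) (use homogeneous in \<open>auto simp: poly_fun_cnj\<close>)
  then show ?thesis
    unfolding cutoff P_def using r by (simp add: field_simps power_add)
qed

lemma sum_flux_deriv_shell:
  assumes "x \<in> space (Rn n)"
  shows "(\<Sum>j\<in>coords n. flux_deriv j x)
       = (of_nat k - of_nat l) * (indicator (unit_ball_n n - quarter_ball_n n) x *\<^sub>R G x)"
  using G_shell[of x] assms unfolding sum_flux_deriv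
  by (cases "1/4 < sqnorm n x \<and> sqnorm n x \<le> 1")
    (auto simp: quarter_ball_n_def unit_ball_n_def radial_cutoff_deriv_def mult.assoc)

lemma norm_G_le: "norm (G x) \<le> (\<Sum>i\<in>coords n. norm (b i)) ^ l * (\<Sum>\<gamma>\<in>Bs. norm (c \<gamma>))"
  unfolding G_def norm_mult norm_power complex_mod_cnj
  by (intro mult_mono power_mono norm_linform_le norm_poly_fun_le abs_nrm_coord_le_1)
    (auto intro!: sum_nonneg zero_le_power)

lemma integrable_indicator_G:
  "A \<in> sets (Rn n) \<Longrightarrow> emeasure (Rn n) A < \<infinity> \<Longrightarrow> integrable (Rn n) (\<lambda>x. indicator A x *\<^sub>R G x)"
  by (rule integrableI_bounded_set_indicator[OF _ measurable_G]) (auto intro: norm_G_le)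

lemma integral_shell_G_eq_0:
  "integral\<^sup>L (Rn n) (\<lambda>x. indicator (unit_ball_n n - quarter_ball_n n) x *\<^sub>R G x) = 0"
proof -
  have "(of_nat k - of_nat l) * integral\<^sup>L (Rn n) (\<lambda>x. indicator (unit_ball_n n - quarter_ball_n n) x *\<^sub>R G x)
      = integral\<^sup>L (Rn n) (\<lambda>x. \<Sum>j\<in>coords n. flux_deriv j x)"
    by (simp only: sum_flux_deriv_shell integral_mult_right_zero cong: Bochner_Integration.integral_cong)
  also have "\<dots> = (\<Sum>j\<in>coords n. integral\<^sup>L (Rn n) (flux_deriv j))"
    by (rule Bochner_Integration.integral_sum) (use integrable_flux_deriv in auto)
  also have "\<dots> = 0"
    by (simp add: integral_flux_deriv_eq_0)
  finally show ?thesis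
    using degree_ne by simp
qed

lemma G_dilate: "r > 0 \<Longrightarrow> G (dilate (coords n) r x) = G x"
  by (simp add: G_def nrm_dilate)

lemma integral_ball_G_eq_0: "integral\<^sup>L (Rn n) (\<lambda>x. indicator (unit_ball_n n) x *\<^sub>R G x) = 0"
proof -
  let ?int = "\<lambda>A. integral\<^sup>L (Rn n) (\<lambda>x. indicator A x *\<^sub>R G x)"
  have "emeasure (Rn n) (unit_ball_n n - quarter_ball_n n) < \<infinity>"
    using emeasure_mono[OF Diff_subset sets_unit_ball_n] emeasure_unit_ball_n_finite
    by (rule le_less_trans)
  then have "?int (unit_ball_n n - quarter_ball_n n) + ?int (quarter_ball_n n)
      = integral\<^sup>L (Rn n) (\<lambda>x. indicator (unit_ball_n n - quarter_ball_n n) x *\<^sub>R G x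
                                + indicator (quarter_ball_n n) x *\<^sub>R G x)"
    by (intro Bochner_Integration.integral_add[symmetric] integrable_indicator_G
        emeasure_quarter_ball_n_finite) auto
  also have "\<dots> = ?int (unit_ball_n n)"
    using quarter_ball_n_subset
    by (intro Bochner_Integration.integral_cong refl) (auto simp: indicator_def)
  finally have "?int (unit_ball_n n) = ?int (unit_ball_n n - quarter_ball_n n) + ?int (quarter_ball_n n)"
    ..
  also have "?int (quarter_ball_n n)
      = integral\<^sup>L (Rn n) (\<lambda>x. indicator (unit_ball_n n) (dilate (coords n) 2 x) *\<^sub>R G (dilate (coords n) 2 x))"
    by (intro Bochner_Integration.integral_cong refl)
      (auto simp: G_dilate sqnorm_dilate quarter_ball_n_def unit_ball_n_def indicator_def)
  also have "\<dots> = ?int (unit_ball_n n) / 2 ^ card (coords n)"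
  proof -
    have "(\<lambda>x. indicator (unit_ball_n n) x *\<^sub>R G x) \<in> borel_measurable (Rn n)"
      by measurable
    then show ?thesis
      using integral_PiM_lborel_dilate[of "coords n" 2 "\<lambda>x. indicator (unit_ball_n n) x *\<^sub>R G x"]
      by (simp add: Rn_coords)
  qed
  finally have "?int (unit_ball_n n) = ?int (unit_ball_n n) / 2 ^ card (coords n)"
    unfolding integral_shell_G_eq_0 add_0 .
  moreover have "(1::real) < 2 ^ card (coords n)"
    by (rule one_less_power) (auto simp: coords_def)
  then have "(2::complex) ^ card (coords n) \<noteq> 1"
    by (metis less_irrefl of_real_eq_1_iff of_real_numeral of_real_power)
  ultimately show ?thesis
    by (metis div_by_1 divide_cancel_left)
qed

end


lemma sec_partial_poly_fun:
  assumes "finite I" "j \<in> I"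
  shows "sec_partial (poly_fun I Bs a e) j x
       = poly_fun I Bs (deriv_coeffs j (deriv_coeffs j a e) (deriv_exps j e)) (deriv_exps j (deriv_exps j e)) x"
proof -
  have shifted: "((\<lambda>t. poly_fun I Bs a' e' (x(j := x j + t))) has_vector_derivative
                   poly_fun I Bs (deriv_coeffs j a' e') (deriv_exps j e') (x(j := x j + s))) (at s)"
    for a' e' s
  proof -
    have "((\<lambda>t. x j + t) has_vector_derivative 1) (at s)"
      by (auto intro!: derivative_eq_intros simp flip: has_real_derivative_iff_has_vector_derivative)
    from vector_diff_chain_at[OF this has_vector_derivative_poly_fun[OF assms]]
    show ?thesis
      by (simp add: o_def)
  qed
  have "(\<lambda>s. vector_derivative (\<lambda>t. poly_fun I Bs a e (x(j := x j + t))) (at s))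
      = (\<lambda>s. poly_fun I Bs (deriv_coeffs j a e) (deriv_exps j e) (x(j := x j + s)))"
    by (intro ext vector_derivative_at shifted)
  then show ?thesis
    unfolding sec_partial_def using vector_derivative_at[OF shifted] by simp
qed

lemma sph_harmE:
  assumes "sph_harm n k Y"
  obtains Bs c where "\<And>y. y \<in> Sph n \<Longrightarrow> Y y = poly_fun (coords n) Bs c (\<lambda>\<gamma>. \<gamma>) y"
    and "\<And>\<gamma>. \<gamma> \<in> Bs \<Longrightarrow> (\<Sum>i\<in>coords n. \<gamma> i) = k"
    and "\<And>x. poly_laplacian (coords n) Bs c x = 0"
proof -
  from assms obtain P c Bs where Y: "\<forall>x\<in>Sph n. Y x = P x"
    and deg: "\<forall>\<beta>\<in>Bs. (\<Sum>j=1..n+1. \<beta> j) = k"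
    and P: "\<forall>x. P x = (\<Sum>\<beta>\<in>Bs. c \<beta> * (\<Prod>j=1..n+1. (complex_of_real (x j)) ^ (\<beta> j)))"
    and harm: "\<forall>x. (\<Sum>j=1..n+1. sec_partial P j x) = 0"
    unfolding sph_harm_def hom_harm_poly_def by blast
  have P_eq: "P = poly_fun (coords n) Bs c (\<lambda>\<gamma>. \<gamma>)"
    using P by (auto simp: fun_eq_iff poly_fun_def monomial_fun_def coords_def)
  show ?thesis
  proof
    fix x
    have "poly_laplacian (coords n) Bs c x = (\<Sum>j\<in>coords n. sec_partial P j x)"
      unfolding poly_laplacian_def P_eq by (intro sum.cong refl sec_partial_poly_fun[symmetric]) auto
    then show "poly_laplacian (coords n) Bs c x = 0"
      using harm unfolding coords_def by simp
  qed (use Y P_eq deg in \<open>auto simp: coords_def\<close>)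
qed

lemma measurable_sphere_fun_nrm:
  assumes "\<And>y. y \<in> Sph n \<Longrightarrow> f y = f' y"
    and "f' \<in> borel_measurable (Rn n)"
  shows "(\<lambda>x. f (nrm n x)) \<in> borel_measurable (Rn n)"
proof -
  have [measurable]: "f' \<in> borel_measurable (PiM (coords n) (\<lambda>_. lborel))"
    using assms(2) by (simp add: Rn_coords)
  have "(\<lambda>x. if sqnorm n x = 0 then f (restrict (\<lambda>_. 0) (coords n)) else f' (nrm n x))
          \<in> borel_measurable (Rn n)"
    unfolding Rn_coords by measurable
  then show ?thesis
    by (rule measurable_cong[THEN iffD1, rotated]) (auto simp: nrm_zero assms(1) nrm_in_Sph)
qed

lemma sph_int_cong:
  assumes "\<And>y. y \<in> Sph n \<Longrightarrow> f y = f' y"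
    and [measurable]: "(\<lambda>x. f (nrm n x)) \<in> borel_measurable (Rn n)"
      "(\<lambda>x. f' (nrm n x)) \<in> borel_measurable (Rn n)"
  shows "sph_int n f = sph_int n f'"
proof -
  have "integral\<^sup>L (Rn n) (\<lambda>x. indicator (unit_ball_n n) x *\<^sub>R f (nrm n x))
      = integral\<^sup>L (Rn n) (\<lambda>x. indicator (unit_ball_n n) x *\<^sub>R f' (nrm n x))"
    using AE_sqnorm_nonzero[of n] by (intro integral_cong_AE) (auto simp: assms(1) nrm_in_Sph elim!: AE_mp)
  then show ?thesis
    unfolding sph_int_def by simp
qed

lemma sph_int_linform_power_harmonic_eq_0:
  assumes Y: "sph_harm n k Y" and iso: "isotropic (coords n) b" and lk: "l \<noteq> k"
  shows "sph_int n (\<lambda>y. linform (coords n) b y ^ l * cnj (Y y)) = 0"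
proof -
  obtain Bs c where Y_eq: "\<And>y. y \<in> Sph n \<Longrightarrow> Y y = poly_fun (coords n) Bs c (\<lambda>\<gamma>. \<gamma>) y"
    and "\<And>\<gamma>. \<gamma> \<in> Bs \<Longrightarrow> (\<Sum>i\<in>coords n. \<gamma> i) = k"
    and "\<And>x. poly_laplacian (coords n) Bs c x = 0"
    using sph_harmE[OF Y] by metis
  then interpret harmonic_orthogonality n k l Bs c b
    using iso lk by unfold_locales
  have "sph_int n (\<lambda>y. linform (coords n) b y ^ l * cnj (Y y))
      = sph_int n (\<lambda>y. linform (coords n) b y ^ l * cnj (poly_fun (coords n) Bs c (\<lambda>\<gamma>. \<gamma>) y))"
  proof (rule sph_int_cong)
    have "(\<lambda>x. Y (nrm n x)) \<in> borel_measurable (Rn n)"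
      by (rule measurable_sphere_fun_nrm[OF Y_eq]) (unfold Rn_coords, measurable)
    then show "(\<lambda>x. linform (coords n) b (nrm n x) ^ l * cnj (Y (nrm n x))) \<in> borel_measurable (Rn n)"
      unfolding Rn_coords by measurable
  qed (auto simp: Y_eq Rn_coords)
  also have "\<dots> = 0"
    using integral_ball_G_eq_0 unfolding sph_int_def G_def by simp
  finally show ?thesis .
qed

section \<open>Functions of the Laplacian on entire series of an isotropic linear form\<close>

lemma indicator_scaleR_mult_left:
  "indicator A x *\<^sub>R (a * z) = a * (indicator A x *\<^sub>R (z :: complex))"
  by (simp add: indicator_def)

lemma sph_int_mult_left: "sph_int n (\<lambda>y. a * h y) = a * sph_int n h"
  unfolding sph_int_def indicator_scaleR_mult_left integral_mult_right_zero by simp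

lemma integral_indicator_suminf:
  fixes f :: "nat \<Rightarrow> 'a \<Rightarrow> 'b::{banach, second_countable_topology}"
  assumes A [measurable]: "A \<in> sets M" and finA: "emeasure M A < \<infinity>"
    and f [measurable]: "\<And>l. f l \<in> borel_measurable M"
    and bound: "\<And>l x. norm (f l x) \<le> m l" and m: "summable m"
  shows "(\<lambda>l. integral\<^sup>L M (\<lambda>x. indicator A x *\<^sub>R f l x))
           sums integral\<^sup>L M (\<lambda>x. indicator A x *\<^sub>R (\<Sum>l. f l x))"
proof -
  let ?g = "\<lambda>l x. indicator A x *\<^sub>R f l x"
  have g_bound: "norm (?g l x) \<le> m l * indicator A x" for l x
    using bound[of l x] by (auto simp: indicator_def)
  have summable_norm_f: "summable (\<lambda>l. norm (f l x))" for x
    by (rule summable_comparison_test'[OF m, where N=0]) (simp add: bound)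
  have int: "integrable M (?g l)" for l
    by (rule integrableI_bounded_set_indicator[OF A f finA, where B="m l"]) (simp add: bound)
  have int_indicator: "integrable M (\<lambda>x. m l * indicator A x :: real)" for l
    using finA by (intro integrable_mult_right integrable_real_indicator A) auto
  have "integral\<^sup>L M (\<lambda>x. norm (?g l x)) \<le> m l * measure M A" for l
    using integral_mono[OF integrable_norm[OF int] int_indicator g_bound] by simp
  then have "summable (\<lambda>l. integral\<^sup>L M (\<lambda>x. norm (?g l x)))"
    by (intro summable_comparison_test'[OF summable_mult2[OF m], where N=0])
      (simp add: integral_nonneg_AE)
  moreover have "AE x in M. summable (\<lambda>l. norm (?g l x))"
    by (intro AE_I2 summable_comparison_test'[OF summable_norm_f, where N=0])
      (auto simp: indicator_def)
  ultimately have "(\<lambda>l. integral\<^sup>L M (?g l)) sums integral\<^sup>L M (\<lambda>x. \<Sum>l. ?g l x)"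
    using int integral_suminf[of M ?g] summable_integral[of M ?g] by (simp add: sums_iff)
  moreover have "indicator A x *\<^sub>R (\<Sum>l. f l x) = (\<Sum>l. ?g l x)" for x
    using suminf_scaleR_right[OF summable_norm_cancel[OF summable_norm_f]] by simp
  ultimately show ?thesis by simp
qed

lemma sph_int_suminf:
  fixes g :: "nat \<Rightarrow> (nat \<Rightarrow> real) \<Rightarrow> complex"
  assumes "\<And>l. (\<lambda>x. g l (nrm n x)) \<in> borel_measurable (Rn n)"
    and "\<And>l x. norm (g l (nrm n x)) \<le> m l" and "summable m"
  shows "(\<lambda>l. sph_int n (g l)) sums sph_int n (\<lambda>y. \<Sum>l. g l y)"
  unfolding sph_int_def
  by (intro sums_mult integral_indicator_suminf[OF sets_unit_ball_n emeasure_unit_ball_n_finite assms])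

definition entire_coeffs :: "(nat \<Rightarrow> complex) \<Rightarrow> bool" where
  "entire_coeffs a \<longleftrightarrow> (\<forall>R. summable (\<lambda>l. norm (a l) * R ^ l))"

lemma entire_coeffsI:
  assumes "\<And>l. norm (a l) \<le> C * 2 ^ l / fact l"
  shows "entire_coeffs a"
  unfolding entire_coeffs_def
proof
  fix R :: real
  show "summable (\<lambda>l. norm (a l) * R ^ l)"
  proof (rule summable_comparison_test'[OF summable_mult[OF summable_exp_generic[of "2 * \<bar>R\<bar>"]],
        where N=0])
    fix l :: nat
    have "norm (norm (a l) * R ^ l) = norm (a l) * \<bar>R\<bar> ^ l"
      by (simp add: abs_mult power_abs)
    also have "\<dots> \<le> (C * 2 ^ l / fact l) * \<bar>R\<bar> ^ l"
      by (rule mult_right_mono[OF assms]) simp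
    also have "\<dots> = C * ((2 * \<bar>R\<bar>) ^ l /\<^sub>R fact l)"
      by (simp add: power_mult_distrib field_simps)
    finally show "norm (norm (a l) * R ^ l) \<le> C * ((2 * \<bar>R\<bar>) ^ l /\<^sub>R fact l)" .
  qed
qed

lemma summable_norm_entire_series: "entire_coeffs a \<Longrightarrow> summable (\<lambda>l. norm (a l * w ^ l))"
  unfolding entire_coeffs_def by (simp add: norm_mult norm_power)

lemma summable_entire_series: "entire_coeffs a \<Longrightarrow> summable (\<lambda>l. a l * w ^ l)"
  by (rule summable_norm_cancel[OF summable_norm_entire_series])

lemma norm_entire_series_le:
  assumes a: "entire_coeffs a" and w: "norm w \<le> R"
  shows "norm (\<Sum>l. a l * w ^ l) \<le> (\<Sum>l. norm (a l) * R ^ l)"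
proof -
  have "norm (a l * w ^ l) \<le> norm (a l) * R ^ l" for l
    unfolding norm_mult norm_power by (intro mult_left_mono power_mono w) auto
  then show ?thesis
    using summable_norm_entire_series[OF a] a unfolding entire_coeffs_def
    by (intro order.trans[OF summable_norm] suminf_le) auto
qed

lemma measurable_entire_series_linform_nrm:
  assumes "entire_coeffs a"
  shows "(\<lambda>x. \<Sum>l. a l * linform (coords n) b (nrm n x) ^ l) \<in> borel_measurable (Rn n)"
proof -
  have "isCont (\<lambda>w. \<Sum>l. a l * w ^ l) w" for w :: complex
    using summable_entire_series[OF assms, of "of_real (norm w + 1)"] by (intro isCont_powser) auto
  then have "(\<lambda>w. \<Sum>l. a l * w ^ l) \<in> borel_measurable borel"
    by (intro borel_measurable_continuous_onI continuous_at_imp_continuous_on) auto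
  moreover have "(\<lambda>x. linform (coords n) b (nrm n x)) \<in> borel_measurable (Rn n)"
    unfolding Rn_coords by measurable
  ultimately show ?thesis
    by (rule measurable_compose[rotated])
qed

lemma norm_linform_nrm_le: "norm (linform (coords n) b (nrm n x)) \<le> (\<Sum>i\<in>coords n. norm (b i))"
  by (intro norm_linform_le abs_nrm_coord_le_1)

lemma sph_int_entire_series_harmonic:
  assumes Y: "sph_harm n k Y" and iso: "isotropic (coords n) b" and a: "entire_coeffs a"
  shows "sph_int n (\<lambda>y. (\<Sum>l. a l * linform (coords n) b y ^ l) * cnj (Y y))
       = a k * sph_int n (\<lambda>y. linform (coords n) b y ^ k * cnj (Y y))"
proof -
  obtain Bs c where Y_eq: "\<And>y. y \<in> Sph n \<Longrightarrow> Y y = poly_fun (coords n) Bs c (\<lambda>\<gamma>. \<gamma>) y"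
    using sph_harmE[OF Y] by metis
  let ?E = "linform (coords n) b" and ?P = "poly_fun (coords n) Bs c (\<lambda>\<gamma>. \<gamma>)"
  have [measurable]: "(\<lambda>x. ?E (nrm n x)) \<in> borel_measurable (Rn n)"
    "(\<lambda>x. ?P (nrm n x)) \<in> borel_measurable (Rn n)"
    unfolding Rn_coords by measurable
  have [measurable]: "(\<lambda>x. Y (nrm n x)) \<in> borel_measurable (Rn n)"
    by (rule measurable_sphere_fun_nrm[OF Y_eq]) (unfold Rn_coords, measurable)
  have series_meas [measurable]: "(\<lambda>x. \<Sum>l. a l * ?E (nrm n x) ^ l) \<in> borel_measurable (Rn n)"
    by (rule measurable_entire_series_linform_nrm[OF a])
  have Y_to_P: "sph_int n (\<lambda>y. g y * cnj (Y y)) = sph_int n (\<lambda>y. g y * cnj (?P y))"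
    if [measurable]: "(\<lambda>x. g (nrm n x)) \<in> borel_measurable (Rn n)" for g
    by (rule sph_int_cong) (auto simp: Y_eq)
  define BE where "BE = (\<Sum>i\<in>coords n. norm (b i))"
  define BP where "BP = (\<Sum>\<gamma>\<in>Bs. norm (c \<gamma>))"
  have P_bound: "norm (?P (nrm n x)) \<le> BP" for x
    unfolding BP_def by (intro norm_poly_fun_le abs_nrm_coord_le_1)
  have term_bound: "norm (a l * ?E (nrm n x) ^ l * cnj (?P (nrm n x))) \<le> norm (a l) * BE ^ l * BP" for l x
    unfolding norm_mult norm_power complex_mod_cnj BE_def
    by (intro mult_mono mult_left_mono power_mono norm_linform_nrm_le P_bound)
      (auto intro!: sum_nonneg mult_nonneg_nonneg zero_le_power)
  have "(\<lambda>l. sph_int n (\<lambda>y. a l * ?E y ^ l * cnj (?P y)))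
          sums sph_int n (\<lambda>y. \<Sum>l. a l * ?E y ^ l * cnj (?P y))"
    using a unfolding entire_coeffs_def
    by (intro sph_int_suminf[where m="\<lambda>l. norm (a l) * BE ^ l * BP"] term_bound summable_mult2) auto
  moreover have "sph_int n (\<lambda>y. a l * ?E y ^ l * cnj (?P y)) = (if l = k then a k * sph_int n (\<lambda>y. ?E y ^ k * cnj (?P y)) else 0)" for l
    using sph_int_linform_power_harmonic_eq_0[OF Y iso, of l] Y_to_P[of "\<lambda>y. ?E y ^ l"]
    by (auto simp: mult.assoc sph_int_mult_left)
  ultimately have "sph_int n (\<lambda>y. \<Sum>l. a l * ?E y ^ l * cnj (?P y)) = a k * sph_int n (\<lambda>y. ?E y ^ k * cnj (?P y))"
    using sums_single[of k "\<lambda>_. a k * sph_int n (\<lambda>y. ?E y ^ k * cnj (?P y))"] sums_unique2 by force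
  moreover have "(\<Sum>l. a l * ?E y ^ l) * cnj (?P y) = (\<Sum>l. a l * ?E y ^ l * cnj (?P y))" for y
    by (rule suminf_mult2[OF summable_entire_series[OF a]])
  ultimately show ?thesis
    using Y_to_P[of "\<lambda>y. \<Sum>l. a l * ?E y ^ l"] Y_to_P[of "\<lambda>y. ?E y ^ k"] by simp
qed

lemma sph_L2_entire_series:
  assumes a: "entire_coeffs a"
  shows "sph_L2 n (\<lambda>y. \<Sum>l. a l * linform (coords n) b y ^ l)"
proof -
  note [measurable] = measurable_entire_series_linform_nrm[OF a]
  define K where "K = (\<Sum>l. norm (a l) * (\<Sum>i\<in>coords n. norm (b i)) ^ l)"
  have "norm (\<Sum>l. a l * linform (coords n) b (nrm n x) ^ l) \<le> K" for x
    unfolding K_def by (rule norm_entire_series_le[OF a norm_linform_nrm_le])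
  then have "integrable (Rn n)
      (\<lambda>x. indicator (unit_ball_n n) x *\<^sub>R (cmod (\<Sum>l. a l * linform (coords n) b (nrm n x) ^ l))\<^sup>2)"
    by (intro integrableI_bounded_set_indicator[OF sets_unit_ball_n _ emeasure_unit_ball_n_finite,
          where B="K\<^sup>2"] AE_I2 impI) (auto intro: power_mono)
  then show ?thesis
    unfolding sph_L2_def by simp
qed

lemma fcalc_entire_series:
  assumes a: "entire_coeffs a" and a': "entire_coeffs a'" and iso: "isotropic (coords n) b"
    and coeffs: "\<And>l. a' l = complex_of_real (F (lapl_ev n l)) * a l"
  shows "fcalc n F (\<lambda>y. \<Sum>l. a l * linform (coords n) b y ^ l) (\<lambda>y. \<Sum>l. a' l * linform (coords n) b y ^ l)"
  unfolding fcalc_def sph_inner_def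
  using sph_L2_entire_series[OF a] sph_L2_entire_series[OF a'] coeffs
    sph_int_entire_series_harmonic[OF _ iso a] sph_int_entire_series_harmonic[OF _ iso a']
  by simp

lemma sph_L2_mult_left:
  assumes "sph_L2 n h"
  shows "sph_L2 n (\<lambda>x. a * h x)"
proof -
  have [measurable]: "(\<lambda>x. indicator (unit_ball_n n) x *\<^sub>R h (nrm n x)) \<in> borel_measurable (Rn n)"
    and int: "integrable (Rn n) (\<lambda>x. indicator (unit_ball_n n) x * (cmod (h (nrm n x)))\<^sup>2)"
    using assms unfolding sph_L2_def by auto
  have "integrable (Rn n) (\<lambda>x. (cmod a)\<^sup>2 * (indicator (unit_ball_n n) x * (cmod (h (nrm n x)))\<^sup>2))"
    by (rule integrable_mult_right[OF int])
  moreover have "(\<lambda>x. a * (indicator (unit_ball_n n) x *\<^sub>R h (nrm n x))) \<in> borel_measurable (Rn n)"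
    by measurable
  moreover have "(\<lambda>x. indicator (unit_ball_n n) x * (cmod (a * h (nrm n x)))\<^sup>2)
      = (\<lambda>x. (cmod a)\<^sup>2 * (indicator (unit_ball_n n) x * (cmod (h (nrm n x)))\<^sup>2))"
    by (simp only: norm_mult power_mult_distrib mult.left_commute)
  ultimately show ?thesis
    unfolding sph_L2_def by (simp only: indicator_scaleR_mult_left)
qed

lemma fcalc_mult_left:
  assumes "fcalc n F f g"
  shows "fcalc n F (\<lambda>x. a * f x) (\<lambda>x. a * g x)"
  using assms unfolding fcalc_def sph_inner_def
  by (simp add: sph_L2_mult_left mult.assoc sph_int_mult_left mult.left_commute[of _ a])

section \<open>The operators \<open>M\<close>, \<open>N\<close> and \<open>E\<^sub>k\<close> on exponentials of isotropic linear forms\<close>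

definition coh_coeff :: "nat \<Rightarrow> nat \<Rightarrow> real" where
  "coh_coeff n l = sqrt (2 * real l + real n - 1) / (fact l * sqrt (real n - 1))"

lemma exp_eq_entire_series: "exp w = (\<Sum>l. complex_of_real (1 / fact l) * w ^ l)"
  unfolding exp_def by (simp add: scaleR_conv_of_real divide_inverse mult_ac)

lemma entire_series_degree_weighted:
  "(\<Sum>l. complex_of_real (h * real l / fact l) * w ^ l) = complex_of_real h * w * exp w"
proof -
  have "(\<lambda>l. complex_of_real h * w * (w ^ l /\<^sub>R fact l)) sums (complex_of_real h * w * exp w)"
    by (rule sums_mult[OF exp_converges])
  moreover have "(\<lambda>l. complex_of_real h * w * (w ^ l /\<^sub>R fact l))
      = (\<lambda>l. complex_of_real (h * real (Suc l) / fact (Suc l)) * w ^ Suc l)"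
    by (simp add: fun_eq_iff scaleR_conv_of_real divide_inverse mult_ac del: of_nat_Suc)
  ultimately have "(\<lambda>l. complex_of_real (h * real (Suc l) / fact (Suc l)) * w ^ Suc l)
      sums (complex_of_real h * w * exp w)"
    by simp
  then have "(\<lambda>l. complex_of_real (h * real l / fact l) * w ^ l) sums (complex_of_real h * w * exp w + 0)"
    by (subst (asm) sums_Suc_iff) simp
  then show ?thesis
    by (simp add: sums_iff)
qed

lemma entire_coeffs_exp: "entire_coeffs (\<lambda>l. complex_of_real (1 / fact l))"
  by (rule entire_coeffsI[where C=1]) (simp only: norm_of_real, simp add: divide_right_mono)

lemma entire_coeffs_degree_weighted: "entire_coeffs (\<lambda>l. complex_of_real (h * real l / fact l))"
proof (rule entire_coeffsI[where C="\<bar>h\<bar>"])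
  fix l
  have "\<bar>h\<bar> * real l \<le> \<bar>h\<bar> * 2 ^ l"
    using less_exp[of l] by (intro mult_left_mono) (simp_all add: less_imp_le)
  then show "norm (complex_of_real (h * real l / fact l)) \<le> \<bar>h\<bar> * 2 ^ l / fact l"
    by (simp only: norm_of_real) (simp add: abs_mult divide_right_mono)
qed

lemma entire_coeffs_coh_coeff:
  assumes "n \<ge> 2"
  shows "entire_coeffs (\<lambda>l. complex_of_real (coh_coeff n l))"
proof (rule entire_coeffsI[where C=2])
  fix l
  have n1: "real n - 1 \<ge> 1"
    using assms by simp
  have "Suc l \<le> 2 ^ l"
    using less_exp[of l] Suc_le_eq by blast
  then have "real (Suc l) \<le> 2 ^ l"
    by (metis of_nat_le_iff of_nat_numeral of_nat_power)
  then have two_power: "1 + 2 * real l \<le> 2 * 2 ^ l"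
    by simp
  have "2 * real l + real n - 1 \<le> (1 + 2 * real l) * (real n - 1)"
    using mult_left_mono[OF n1, of "2 * real l"] by (simp add: algebra_simps)
  also have "\<dots> \<le> (1 + 2 * real l)\<^sup>2 * (real n - 1)"
    using n1 by (intro mult_right_mono) (auto simp: power2_eq_square)
  finally have "sqrt (2 * real l + real n - 1) \<le> sqrt ((1 + 2 * real l)\<^sup>2 * (real n - 1))"
    by (rule real_sqrt_le_mono)
  also have "\<dots> = (1 + 2 * real l) * sqrt (real n - 1)"
    by (simp add: real_sqrt_mult)
  also have "\<dots> \<le> 2 * 2 ^ l * sqrt (real n - 1)"
    using two_power n1 by (intro mult_right_mono) simp_all
  finally have "sqrt (2 * real l + real n - 1) / sqrt (real n - 1) \<le> 2 * 2 ^ l"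
    using n1 by (simp add: divide_le_eq)
  then show "norm (complex_of_real (coh_coeff n l)) \<le> 2 * 2 ^ l / fact l"
    using n1 unfolding norm_of_real coh_coeff_def by (simp add: divide_right_mono field_simps)
qed

lemma coh_coeff_lapl_ev:
  assumes "n \<ge> 2"
  shows "coh_coeff n l = sqrt (2 / (real n - 1)) * lapl_ev n l powr (1/4) * (1 / fact l)"
proof -
  define t where "t = real l + (real n - 1) / 2"
  have t: "t > 0"
    using assms by (simp add: t_def add_nonneg_pos)
  have "t\<^sup>2 = t powr (real 2)"
    using t by (simp add: powr_realpow)
  then have "lapl_ev n l powr (1/4) = t powr (1/2)"
    unfolding lapl_ev_def t_def[symmetric] by (simp add: powr_powr)
  also have "\<dots> = sqrt t"
    using t by (simp add: powr_half_sqrt)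
  finally have "sqrt (2 / (real n - 1)) * lapl_ev n l powr (1/4) = sqrt (2 / (real n - 1) * t)"
    by (simp only: real_sqrt_mult)
  also have "2 / (real n - 1) * t = (2 * real l + real n - 1) / (real n - 1)"
    using assms by (simp add: t_def field_simps)
  finally have "sqrt (2 / (real n - 1)) * lapl_ev n l powr (1/4)
      = sqrt (2 * real l + real n - 1) / sqrt (real n - 1)"
    by (simp only: real_sqrt_divide)
  then show ?thesis
    unfolding coh_coeff_def by simp
qed

lemma sqrt_lapl_ev: "n \<ge> 1 \<Longrightarrow> sqrt (lapl_ev n l) = real l + (real n - 1) / 2"
  by (simp add: lapl_ev_def)

lemma M_op_exp_linform:
  assumes "n \<ge> 2" and "isotropic (coords n) b"
  shows "M_op n (\<lambda>x. exp (linform (coords n) b x))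
                (\<lambda>x. \<Sum>l. complex_of_real (coh_coeff n l) * linform (coords n) b x ^ l)"
  unfolding M_op_def exp_eq_entire_series
  by (rule fcalc_entire_series[OF entire_coeffs_exp entire_coeffs_coh_coeff[OF assms(1)] assms(2)])
    (simp add: coh_coeff_lapl_ev[OF assms(1)])

lemma N_op_exp_linform:
  assumes "n \<ge> 1" and "isotropic (coords n) b"
  shows "N_op n h (\<lambda>x. exp (linform (coords n) b x))
                  (\<lambda>x. complex_of_real h * linform (coords n) b x * exp (linform (coords n) b x))"
  unfolding N_op_def entire_series_degree_weighted[symmetric] unfolding exp_eq_entire_series
  by (rule fcalc_entire_series[OF entire_coeffs_exp entire_coeffs_degree_weighted assms(2)])
    (simp add: sqrt_lapl_ev[OF assms(1)])

lemma linform_rot: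
  assumes "finite I" "j \<in> I" "k \<in> I" "j \<noteq> k"
  shows "linform I b (rot k j t x) = linform I b x
     + complex_of_real (x j * cos t + x k * sin t - x j) * b j
     + complex_of_real (x k * cos t - x j * sin t - x k) * b k"
proof -
  have "rot k j t x = (x(j := x j * cos t + x k * sin t))(k := x k * cos t - x j * sin t)"
    using assms(4) by (simp add: rot_def)
  then show ?thesis
    using assms by (simp add: linform_upd)
qed

lemma has_vector_derivative_exp_linform_rot:
  assumes "finite I" "j \<in> I" "k \<in> I"
  shows "((\<lambda>t. exp (linform I b (rot k j t x))) has_vector_derivative
           (complex_of_real (x k) * b j - complex_of_real (x j) * b k) * exp (linform I b x)) (at 0)"
proof (cases "j = k")
  case False
  have "((\<lambda>t. linform I b (rot k j t x)) has_vector_derivative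
           complex_of_real (x k) * b j - complex_of_real (x j) * b k) (at 0)"
    unfolding linform_rot[OF assms False]
    by (rule has_vector_derivative_eq_rhs) (auto intro!: derivative_eq_intros simp: algebra_simps)
  from field_vector_diff_chain_at[OF this DERIV_exp]
  show ?thesis
    by (simp add: o_def linform_rot[OF assms False])
qed (simp add: rot_def)

lemma angular_momentum_sum:
  fixes X B :: "nat \<Rightarrow> complex"
  shows "(\<Sum>j\<in>J. (- \<i> * X j) * (- \<i> * H * ((Xk * B j - X j * Bk) * e)))
     = H * e * (Bk * (\<Sum>j\<in>J. X j * X j) - Xk * (\<Sum>j\<in>J. X j * B j))"
proof -
  have "(- \<i> * X j) * (- \<i> * H * ((Xk * B j - X j * Bk) * e))
      = (\<i> * \<i>) * (X j * H * ((Xk * B j - X j * Bk) * e))" for j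
    by (simp add: algebra_simps)
  then have "(- \<i> * X j) * (- \<i> * H * ((Xk * B j - X j * Bk) * e))
      = H * e * Bk * (X j * X j) - H * e * Xk * (X j * B j)" for j
    by (simp add: algebra_simps)
  then show ?thesis
    by (simp add: sum_subtractf sum_distrib_left right_diff_distrib mult.assoc)
qed

text \<open>On the sphere \<open>|x| = 1\<close>, the angular part of \<open>E\<^sub>k\<close> produces \<open>\<hbar> (b\<^sub>k - x\<^sub>k (x \<cdot> b))\<close> times
  the exponential and the radial part \<open>x\<^sub>k N\<close> contributes the compensating \<open>\<hbar> x\<^sub>k (x \<cdot> b)\<close>.\<close>

lemma E_op_exp_linform:
  assumes n: "n \<ge> 1" and iso: "isotropic (coords n) b" and k: "k \<in> coords n"
  shows "E_op n h k (\<lambda>x. exp (linform (coords n) b x))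
           (\<lambda>x. (complex_of_real h * b k) * exp (linform (coords n) b x))"
  unfolding E_op_def
proof (intro exI conjI ballI)
  let ?E = "linform (coords n) b"
  show "N_op n h (\<lambda>x. exp (?E x)) (\<lambda>x. complex_of_real h * ?E x * exp (?E x))"
    by (rule N_op_exp_linform[OF n iso])
  fix x
  assume x: "x \<in> Sph n"
  define D where "D j = (complex_of_real (x k) * b j - complex_of_real (x j) * b k) * exp (?E x)" for j
  have deriv: "((\<lambda>t. exp (?E (rot k j t x))) has_vector_derivative D j) (at 0)" if "j \<in> coords n" for j
    unfolding D_def using that k by (intro has_vector_derivative_exp_linform_rot) auto
  show "(\<lambda>t. exp (?E (rot k j t x))) differentiable (at 0)" if "j \<in> {1..n+1}" for j
    using deriv[of j] that by (auto simp: coords_def intro: differentiableI_vector)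
  have "(\<Sum>j=1..n+1. (- \<i> * complex_of_real (x j)) * (- \<i> * complex_of_real h * Lt k j (\<lambda>x. exp (?E x)) x))
      = (\<Sum>j\<in>coords n. (- \<i> * complex_of_real (x j)) * (- \<i> * complex_of_real h * D j))"
    unfolding coords_def[symmetric] Lt_def using deriv by (intro sum.cong refl) (simp add: vector_derivative_at)
  also have "\<dots> = complex_of_real h * exp (?E x) * (b k * (\<Sum>j\<in>coords n. complex_of_real (x j) * complex_of_real (x j))
      - complex_of_real (x k) * (\<Sum>j\<in>coords n. complex_of_real (x j) * b j))"
    unfolding D_def by (rule angular_momentum_sum)
  also have "(\<Sum>j\<in>coords n. complex_of_real (x j) * complex_of_real (x j)) = complex_of_real (sqnorm n x)"
    by (simp add: sqnorm_coords power2_eq_square)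
  also have "sqnorm n x = 1"
    using x by (simp add: Sph_def)
  finally show "complex_of_real h * b k * exp (?E x)
      = (\<Sum>j=1..n+1. (- \<i> * complex_of_real (x j)) * (- \<i> * complex_of_real h * Lt k j (\<lambda>x. exp (?E x)) x))
        + complex_of_real (x k) * (complex_of_real h * ?E x * exp (?E x))"
    by (simp add: linform_def algebra_simps)
qed

lemma isotropic_rho:
  assumes "(n, m) \<in> {(2, 2), (3, 4), (5, 8)}"
  shows "isotropic (coords n) (rho n m z)"
proof -
  consider "n = 2" "m = 2" | "n = 3" "m = 4" | "n = 5" "m = 8"
    using assms by auto
  then show ?thesis
  proof cases
    case 1
    then show ?thesis
      by (simp add: isotropic_def coords_def rho_def numeral_eq_Suc rho22_def power2_eq_square field_simps)
  next
    case 2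
    then show ?thesis
      by (simp add: isotropic_def coords_def rho_def numeral_eq_Suc rho34_def power2_eq_square algebra_simps)
  next
    case 3
    then show ?thesis
      by (simp add: isotropic_def coords_def rho_def numeral_eq_Suc rho58_def power2_eq_square algebra_simps)
  qed
qed

lemma isotropic_cnj_divide: "isotropic I a \<Longrightarrow> isotropic I (\<lambda>j. cnj (a j) / c)"
  unfolding isotropic_def by (simp add: power_divide flip: sum_divide_distrib cnj_sum complex_cnj_power)

theorem mainTheorem12:
  fixes n m :: nat and hbar :: real and z :: "nat \<Rightarrow> complex" and k :: nat
  assumes nm: "(n, m) \<in> {(2, 2), (3, 4), (5, 8)}"
    and hbar: "hbar > 0"
    and k: "k \<in> {1..n+1}"
  defines "\<alpha> \<equiv> rho n m z"
  shows "A_op n hbar k (coh n hbar \<alpha>) (\<lambda>x. cnj (\<alpha> k) * coh n hbar \<alpha> x)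
       \<and> M_op n (\<lambda>x. exp (dotc n x \<alpha> / complex_of_real hbar)) (coh n hbar \<alpha>)
       \<and> E_op n hbar k (\<lambda>x. exp (dotc n x \<alpha> / complex_of_real hbar))
                       (\<lambda>x. cnj (\<alpha> k) * exp (dotc n x \<alpha> / complex_of_real hbar))"
proof -
  have n: "n \<ge> 2"
    using nm by auto
  define b where "b j = cnj (\<alpha> j) / complex_of_real hbar" for j
  have dotc: "dotc n x \<alpha> / complex_of_real hbar = linform (coords n) b x" for x
    unfolding dotc_def linform_def b_def coords_def by (simp only: sum_divide_distrib times_divide_eq_right)
  have iso: "isotropic (coords n) b"
    unfolding b_def \<alpha>_def by (intro isotropic_cnj_divide isotropic_rho nm)
  have coh: "coh n hbar \<alpha> = (\<lambda>x. \<Sum>l. complex_of_real (coh_coeff n l) * linform (coords n) b x ^ l)"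
    unfolding coh_def coh_coeff_def dotc ..
  have eigenvalue: "complex_of_real hbar * b k = cnj (\<alpha> k)"
    using hbar by (simp add: b_def)
  have M: "M_op n (\<lambda>x. exp (dotc n x \<alpha> / complex_of_real hbar)) (coh n hbar \<alpha>)"
    unfolding dotc coh by (rule M_op_exp_linform[OF n iso])
  moreover have E: "E_op n hbar k (\<lambda>x. exp (dotc n x \<alpha> / complex_of_real hbar))
                      (\<lambda>x. cnj (\<alpha> k) * exp (dotc n x \<alpha> / complex_of_real hbar))"
    unfolding dotc eigenvalue[symmetric] using n k by (intro E_op_exp_linform iso) (auto simp: coords_def)
  moreover have "M_op n (\<lambda>x. cnj (\<alpha> k) * exp (dotc n x \<alpha> / complex_of_real hbar))
                       (\<lambda>x. cnj (\<alpha> k) * coh n hbar \<alpha> x)"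
    using M unfolding M_op_def by (rule fcalc_mult_left)
  ultimately show ?thesis
    unfolding A_op_def by blast
qed

end
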